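(* Let $A^\star\in\mathbb{R}^{n\times n}$, $B^\star\in\mathbb{R}^{n\times m}$, $C^\star\in\mathbb{R}^{p\times n}$ with $(A^\star,C^\star)$ observable with observability index $\ell^\star$ and $p\ell^\star>n$. Let $A_a\in\mathbb{R}^{(p\ell^\star-n)\times(p\ell^\star-n)}$, $B_a\in\mathbb{R}^{(p\ell^\star-n)\times m}$, $C_a\in\mathbb{R}^{p\times(p\ell^\star-n)}$ be chosen matrices. Let data $\{u^{\mathrm m}(k),y^{\mathrm m}_{\mathrm{aug}}(k)\}_{k=0}^T$ be generated as in the context, let $\Psi_0^{\mathrm{aug}},\Theta^{\mathrm{aug}}_{22},\mathscr{A}_{\mathrm{aug}},\mathscr{B}_{\mathrm{aug}},\mathscr{C}_{\mathrm{aug}},\mathbf{F}_{\ell^\star},\mathbf{L}_{\ell^\star},\mathbf{B}_{\ell^\star}$ be as in the context, assume $\Delta^{\mathrm{aug}}_{10}{\Delta^{\mathrm{aug}}_{10}}^\top\preceq\Theta^{\mathrm{aug}}$ and $\Psi_0^{\mathrm{aug}}{\Psi_0^{\mathrm{aug}}}^\top\succ\Theta_{22}^{\mathrm{aug}}$. Suppose there exist $\mathbf{Y}$ and $P=P^\top\succ0$ such that $$\begin{bmatrix}-P-\mathbf{L}_{\ell^\star}\mathscr{C}_{\mathrm{aug}}\mathbf{L}_{\ell^\star}^\top & \mathbf{F}_{\ell^\star}P+\mathbf{B}_{\ell^\star}\mathbf{Y} & \mathbf{L}_{\ell^\star}\mathscr{B}_{\mathrm{aug}}\\ P\mathbf{F}_{\ell^\star}^\top+\mathbf{Y}^\top\mathbf{B}_{\ell^\star}^\top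 & -P & -P\\ \mathscr{B}_{\mathrm{aug}}^\top\mathbf{L}_{\ell^\star}^\top & -P & -\mathscr{A}_{\mathrm{aug}}\end{bmatrix}\prec0,$$ and let $\mathbf{K}=\mathbf{Y}P^{-1}$. Then $(x,x_a,\chi)=0$ is globally asymptotically stable for the feedback interconnection of the plant $x^+=A^\star x+B^\star u$, $y=C^\star x$ with the controller $$\begin{bmatrix}x_a^+\\\chi^+\end{bmatrix}=\begin{bmatrix}A_a & B_a\mathbf{K}\\ \mathbf{L}_{\ell^\star}C_a & \mathbf{F}_{\ell^\star}+\mathbf{B}_{\ell^\star}\mathbf{K}\end{bmatrix}\begin{bmatrix}x_a\\\chi\end{bmatrix}+\begin{bmatrix}0\\\mathbf{L}_{\ell^\star}\end{bmatrix}y,\qquad u=\mathbf{K}\chi.$$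
   Context: Notation: $(v_1,\dots,v_r)$ denotes a stacked column vector. Let $\ell=\ell^\star$. $\mathbf{F}_\ell=\mathrm{blockdiag}(S_p,S_m)$ where $S_q\in\mathbb{R}^{q\ell\times q\ell}$ has blocks $I_q$ in block positions $(i,i+1)$, $i=1,\dots,\ell-1$, and zeros elsewhere; $\mathbf{L}_\ell\in\mathbb{R}^{(p\ell+m\ell)\times p}$ has $I_p$ in rows $p\ell-p+1,\dots,p\ell$ and zeros elsewhere; $\mathbf{B}_\ell\in\mathbb{R}^{(p\ell+m\ell)\times m}$ has $I_m$ in its last $m$ rows, zeros elsewhere. Data generation (augmented experiment): for $k=0,\dots,T$, with unknown noises $d^u,d^y$ and applied signal $u^{\mathrm m}$, the plant evolves as $x(k+1)=A^\star x(k)+B^\star(u^{\mathrm m}(k)-d^u(k))$, an artificial state evolves as $x_a^{\mathrm m}(k+1)=A_ax_a^{\mathrm m}(k)+B_au^{\mathrm m}(k)$, and the measured output is $y^{\mathrm m}_{\mathrm{aug}}(k)=C^\star x(k)+d^y(k)+C_ax^{\mathrm m}_a(k)$. Define $d^{y_a}(k)=\sum_{j=0}^{k-1}C_aA_a^{k-j-1}B_ad^u(j)$ and $d^{y_{\mathrm{aug}}}=d^y+d^{y_a}$. Matrices with columns indexed by $j=0,\dots,T-\ell$: column $j$ of $\Psi_1^{\mathrm{aug}}$ is $(y^{\mathrm m}_{\mathrm{aug}}(j+1),\dots,y^{\mathrm m}_{\mathrm{aug}}(j+\ell),u^{\mathrm m}(j+1),\dots,u^{\mathrm m}(j+\ell))$;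 column $j$ of $\Psi_0^{\mathrm{aug}}$ is $(y^{\mathrm m}_{\mathrm{aug}}(j),\dots,y^{\mathrm m}_{\mathrm{aug}}(j+\ell-1),u^{\mathrm m}(j),\dots,u^{\mathrm m}(j+\ell-1))$; column $j$ of $\Delta^{\mathrm{aug}}_{10}$ is $(d^{y_{\mathrm{aug}}}(j+\ell),d^{y_{\mathrm{aug}}}(j),\dots,d^{y_{\mathrm{aug}}}(j+\ell-1),d^u(j),\dots,d^u(j+\ell-1))$. $\Theta^{\mathrm{aug}}=(\Theta^{\mathrm{aug}})^\top\succeq0$ of size $p+p\ell+m\ell$ is given and partitioned as $\begin{bmatrix}\Theta^{\mathrm{aug}}_{11}&\Theta^{\mathrm{aug}}_{12}\\ (\Theta^{\mathrm{aug}}_{12})^\top&\Theta^{\mathrm{aug}}_{22}\end{bmatrix}$ with $\Theta^{\mathrm{aug}}_{11}\in\mathbb{R}^{p\times p}$. Define $\mathscr{A}_{\mathrm{aug}}=\Psi_0^{\mathrm{aug}}{\Psi_0^{\mathrm{aug}}}^\top-\Theta^{\mathrm{aug}}_{22}$, $\mathscr{B}_{\mathrm{aug}}=-\mathbf{L}_\ell^\top\Psi_1^{\mathrm{aug}}{\Psi_0^{\mathrm{aug}}}^\top+\Theta^{\mathrm{aug}}_{12}$, $\mathscr{C}_{\mathrm{aug}}=\mathbf{L}_\ell^\top\Psi_1^{\mathrm{aug}}{\Psi_1^{\mathrm{aug}}}^\top\mathbf{L}_\ell-\Theta^{\mathrm{aug}}_{11}$. *)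

theory Defs
  imports "Jordan_Normal_Form.Matrix" "Jordan_Normal_Form.Gauss_Jordan_Elimination"
          "Jordan_Normal_Form.DL_Rank"
begin

definition obs_mat :: "real mat \<Rightarrow> real mat \<Rightarrow> nat \<Rightarrow> real mat" where
  "obs_mat A C l = mat (dim_row C * l) (dim_col A)
     (\<lambda>(r,c). (C * (A ^\<^sub>m (r div dim_row C))) $$ (r mod dim_row C, c))"

definition obs_index :: "real mat \<Rightarrow> real mat \<Rightarrow> nat \<Rightarrow> bool" where
  "obs_index A C l \<longleftrightarrow>
     vec_space.rank (dim_row C * l) (obs_mat A C l) = dim_col A \<and>
     (\<forall>k<l. vec_space.rank (dim_row C * k) (obs_mat A C k) \<noteq> dim_col A)"

definition psd_mat :: "real mat \<Rightarrow> nat \<Rightarrow> bool" where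
  "psd_mat M N \<longleftrightarrow> M \<in> carrier_mat N N \<and> M\<^sup>T = M \<and>
     (\<forall>v\<in>carrier_vec N. 0 \<le> v \<bullet> (M *\<^sub>v v))"

definition pd_mat :: "real mat \<Rightarrow> nat \<Rightarrow> bool" where
  "pd_mat M N \<longleftrightarrow> M \<in> carrier_mat N N \<and> M\<^sup>T = M \<and>
     (\<forall>v\<in>carrier_vec N. v \<noteq> 0\<^sub>v N \<longrightarrow> 0 < v \<bullet> (M *\<^sub>v v))"

definition nd_mat :: "real mat \<Rightarrow> nat \<Rightarrow> bool" where
  "nd_mat M N \<longleftrightarrow> pd_mat (- M) N"

(* S_q : (q l) x (q l), identity blocks at block positions (i,i+1) *)
definition shift_mat :: "nat \<Rightarrow> nat \<Rightarrow> real mat" where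
  "shift_mat q l = mat (q*l) (q*l) (\<lambda>(r,c). if c = r + q then 1 else 0)"

definition F_mat :: "nat \<Rightarrow> nat \<Rightarrow> nat \<Rightarrow> real mat" where
  "F_mat p m l = four_block_mat (shift_mat p l) (0\<^sub>m (p*l) (m*l))
                                (0\<^sub>m (m*l) (p*l)) (shift_mat m l)"

definition L_mat :: "nat \<Rightarrow> nat \<Rightarrow> nat \<Rightarrow> real mat" where
  "L_mat p m l = mat (p*l + m*l) p (\<lambda>(r,c). if r = p*l - p + c then 1 else 0)"

definition B_mat :: "nat \<Rightarrow> nat \<Rightarrow> nat \<Rightarrow> real mat" where
  "B_mat p m l = mat (p*l + m*l) m (\<lambda>(r,c). if r = p*l + m*l - m + c then 1 else 0)"

(* stacked vector (y(s),...,y(s+l-1), u(s),...,u(s+l-1)) *)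
definition stack_yu :: "nat \<Rightarrow> nat \<Rightarrow> nat \<Rightarrow> (nat \<Rightarrow> real vec) \<Rightarrow> (nat \<Rightarrow> real vec) \<Rightarrow> nat \<Rightarrow> real vec" where
  "stack_yu p m l y u s = vec (p*l + m*l) (\<lambda>i.
     if i < p*l then y (s + i div p) $ (i mod p)
     else u (s + (i - p*l) div m) $ ((i - p*l) mod m))"

definition Psi1 :: "nat \<Rightarrow> nat \<Rightarrow> nat \<Rightarrow> nat \<Rightarrow> (nat \<Rightarrow> real vec) \<Rightarrow> (nat \<Rightarrow> real vec) \<Rightarrow> real mat" where
  "Psi1 p m l T y u = mat (p*l + m*l) (T + 1 - l) (\<lambda>(i,j). stack_yu p m l y u (j+1) $ i)"

definition Psi0 :: "nat \<Rightarrow> nat \<Rightarrow> nat \<Rightarrow> nat \<Rightarrow> (nat \<Rightarrow> real vec) \<Rightarrow> (nat \<Rightarrow> real vec) \<Rightarrow> real mat" where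
  "Psi0 p m l T y u = mat (p*l + m*l) (T + 1 - l) (\<lambda>(i,j). stack_yu p m l y u j $ i)"

definition dya :: "real mat \<Rightarrow> real mat \<Rightarrow> real mat \<Rightarrow> (nat \<Rightarrow> real vec) \<Rightarrow> nat \<Rightarrow> real vec" where
  "dya Aa Ba Ca du k = vec (dim_row Ca)
     (\<lambda>i. \<Sum>j<k. (Ca * (Aa ^\<^sub>m (k - j - 1)) * Ba *\<^sub>v du j) $ i)"

definition Delta10 :: "nat \<Rightarrow> nat \<Rightarrow> nat \<Rightarrow> nat \<Rightarrow> (nat \<Rightarrow> real vec) \<Rightarrow> (nat \<Rightarrow> real vec) \<Rightarrow> real mat" where
  "Delta10 p m l T dyaug du = mat (p + p*l + m*l) (T + 1 - l) (\<lambda>(i,j).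
     if i < p then dyaug (j + l) $ i
     else stack_yu p m l dyaug du j $ (i - p))"

definition Th11 :: "nat \<Rightarrow> real mat \<Rightarrow> real mat" where
  "Th11 p Th = mat p p (\<lambda>(i,j). Th $$ (i,j))"
definition Th12 :: "nat \<Rightarrow> nat \<Rightarrow> real mat \<Rightarrow> real mat" where
  "Th12 p N Th = mat p N (\<lambda>(i,j). Th $$ (i, p + j))"
definition Th22 :: "nat \<Rightarrow> nat \<Rightarrow> real mat \<Rightarrow> real mat" where
  "Th22 p N Th = mat N N (\<lambda>(i,j). Th $$ (p + i, p + j))"

definition block3 :: "nat \<Rightarrow> (nat \<Rightarrow> nat \<Rightarrow> real mat) \<Rightarrow> real mat" where
  "block3 N M = mat (3*N) (3*N) (\<lambda>(i,j). M (i div N) (j div N) $$ (i mod N, j mod N))"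

definition vnorm :: "real vec \<Rightarrow> real" where
  "vnorm v = sqrt (v \<bullet> v)"

definition closed_loop_sol where
  "closed_loop_sol A B C Aa Ba Ca F L Bl K n na N x xa chi \<longleftrightarrow>
     (\<forall>k. x k \<in> carrier_vec n \<and> xa k \<in> carrier_vec na \<and> chi k \<in> carrier_vec N) \<and>
     (\<forall>k. x (Suc k) = A *\<^sub>v x k + B *\<^sub>v (K *\<^sub>v chi k) \<and>
          xa (Suc k) = Aa *\<^sub>v xa k + (Ba * K) *\<^sub>v chi k \<and>
          chi (Suc k) = (L * Ca) *\<^sub>v xa k + (F + Bl * K) *\<^sub>v chi k + L *\<^sub>v (C *\<^sub>v x k))"

definition cl_norm :: "real vec \<Rightarrow> real vec \<Rightarrow> real vec \<Rightarrow> real" where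
  "cl_norm x xa chi = sqrt (x \<bullet> x + xa \<bullet> xa + chi \<bullet> chi)"

definition closed_loop_GAS where
  "closed_loop_GAS A B C Aa Ba Ca F L Bl K n na N \<longleftrightarrow>
     (\<forall>\<epsilon>>0. \<exists>\<delta>>0. \<forall>x xa chi.
        closed_loop_sol A B C Aa Ba Ca F L Bl K n na N x xa chi \<longrightarrow>
        cl_norm (x 0) (xa 0) (chi 0) < \<delta> \<longrightarrow>
        (\<forall>k. cl_norm (x k) (xa k) (chi k) < \<epsilon>)) \<and>
     (\<forall>x xa chi. closed_loop_sol A B C Aa Ba Ca F L Bl K n na N x xa chi \<longrightarrow>
        (\<lambda>k. cl_norm (x k) (xa k) (chi k)) \<longlonglongrightarrow> 0)"

end

(*
  Let chi be the controller state: by construction of F, L and B it is a shift register holding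
  the last l outputs and inputs of the augmented plant (plant plus artificial system, of order
  p l). If the window map W, sending initial state and inputs to the window of outputs and
  inputs, is invertible, then after l steps the plant state is H chi and the next output is
  G chi, with H = E W^-1 (E sends the same data to the final state) and G = C_aug H; hence chi
  evolves by chi+ = Phi chi with Phi = F + B K + L G.

  Invertibility of W comes from the data alone: a vector orthogonal to all noise-free windows
  sees only the noise part of Psi_0, whose energy is bounded by Theta_22, contradicting
  Psi_0 Psi_0^T > Theta_22. The residuals
  y(j+l) - G psi_j are noise columns [I, -G] Delta_j, hence the noise bound gives a quadratic
  matrix inequality for the unknown G. Evaluating the LMI at (a, Phi^T a, -G^T L^T a) and using
  this inequality yields a^T Phi P Phi^T a < a^T P a. So every eigenvalue of Phi lies in the open
  unit disc, the powers of Phi decay geometrically, and the closed-loop state decays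
  exponentially.
*)

theory Submission
  imports Defs "Jordan_Normal_Form.Spectral_Radius"
begin

section \<open>Vectors and matrices\<close>

lemma scalar_prod_mult_mat_vec_sum:
  assumes "A \<in> carrier_mat r c" and "x \<in> carrier_vec r" and "y \<in> carrier_vec c"
  shows "x \<bullet> (A *\<^sub>v y) = (\<Sum>i<r. \<Sum>j<c. x$i * A$$(i,j) * y$j)"
  using assms
  by (auto simp: scalar_prod_def row_def sum_distrib_left mult.assoc atLeast0LessThan intro!: sum.cong)

lemma scalar_prod_self_sum: "(v :: real vec) \<in> carrier_vec n \<Longrightarrow> v \<bullet> v = (\<Sum>i<n. (v$i)^2)"
  by (simp add: scalar_prod_def atLeast0LessThan power2_eq_square)

lemma scalar_prod_self_nonneg: "0 \<le> (v :: real vec) \<bullet> v"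
  by (simp add: scalar_prod_def sum_nonneg)

lemma scalar_prod_add_self_le:
  assumes "a \<in> carrier_vec n" and "b \<in> carrier_vec n"
  shows "(a + b) \<bullet> (a + b) \<le> 2 * (a \<bullet> a) + 2 * (b \<bullet> (b :: real vec))"
proof -
  have "(a + b) \<bullet> (a + b) = (\<Sum>i<n. (a$i + b$i)^2)"
    using assms by (simp add: scalar_prod_self_sum[of _ n])
  also have "\<dots> \<le> (\<Sum>i<n. 2 * (a$i)^2 + 2 * (b$i)^2)"
  proof (rule sum_mono)
    fix i
    have "0 \<le> (a$i - b$i)^2" by simp
    then show "(a$i + b$i)^2 \<le> 2 * (a$i)^2 + 2 * (b$i)^2"
      by (simp add: power2_sum power2_diff)
  qed
  also have "\<dots> = 2 * (a \<bullet> a) + 2 * (b \<bullet> b)"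
    using assms by (simp add: scalar_prod_self_sum[of _ n] sum.distrib sum_distrib_left)
  finally show ?thesis .
qed

lemma scalar_prod_mult_transpose_sum:
  assumes M: "(M :: real mat) \<in> carrier_mat r c" and M': "M' \<in> carrier_mat r' c"
    and u: "u \<in> carrier_vec r" and u': "u' \<in> carrier_vec r'"
  shows "u \<bullet> ((M * M'\<^sup>T) *\<^sub>v u') = (\<Sum>j<c. (col M j \<bullet> u) * (col M' j \<bullet> u'))"
proof -
  have "u \<bullet> ((M * M'\<^sup>T) *\<^sub>v u') = (M\<^sup>T *\<^sub>v u) \<bullet> (M'\<^sup>T *\<^sub>v u')"
    using M M' u u' by (simp add: transpose_vec_mult_scalar[of M r c])
  also have "\<dots> = (\<Sum>j<c. (col M j \<bullet> u) * (col M' j \<bullet> u'))"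
    using M M' by (simp add: scalar_prod_def atLeast0LessThan)
  finally show ?thesis .
qed

lemma scalar_prod_gram_sum:
  assumes "(M :: real mat) \<in> carrier_mat r c" and "u \<in> carrier_vec r"
  shows "u \<bullet> ((M * M\<^sup>T) *\<^sub>v u) = (\<Sum>j<c. (col M j \<bullet> u)^2)"
  using scalar_prod_mult_transpose_sum[OF assms(1,1,2,2)] by (simp add: power2_eq_square)

lemma scalar_prod_transpose_swap:
  assumes "A \<in> carrier_mat r c" and "x \<in> carrier_vec r" and "y \<in> carrier_vec c"
  shows "y \<bullet> (A\<^sup>T *\<^sub>v x) = x \<bullet> (A *\<^sub>v (y :: real vec))"
  using assms comm_scalar_prod[of y c "A\<^sup>T *\<^sub>v x"] transpose_vec_mult_scalar[of A r c y x] by simp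

lemma linear_functional_sum_unit_vec:
  fixes f :: "real vec \<Rightarrow> real"
  assumes add: "\<And>x y. x \<in> carrier_vec N \<Longrightarrow> y \<in> carrier_vec N \<Longrightarrow> f (x + y) = f x + f y"
    and smult: "\<And>c x. x \<in> carrier_vec N \<Longrightarrow> f (c \<cdot>\<^sub>v x) = c * f x"
    and z: "z \<in> carrier_vec N"
  shows "f z = (\<Sum>j<N. z$j * f (unit_vec N j))"
proof -
  define trunc where "trunc k = vec N (\<lambda>i. if i < k then z$i else 0)" for k
  have trunc_carrier: "trunc k \<in> carrier_vec N" for k
    by (simp add: trunc_def)
  have "f (trunc k) = (\<Sum>j<k. z$j * f (unit_vec N j))" if "k \<le> N" for k
    using that
  proof (induction k)
    case 0
    have "trunc 0 = 0 \<cdot>\<^sub>v trunc 0"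
      by (intro eq_vecI) (auto simp: trunc_def)
    then show ?case
      using smult[of "trunc 0" 0] by (simp add: trunc_carrier)
  next
    case (Suc k)
    have "trunc (Suc k) = trunc k + z$k \<cdot>\<^sub>v unit_vec N k"
      using Suc.prems by (intro eq_vecI) (auto simp: trunc_def less_Suc_eq)
    then show ?case
      using Suc add[of "trunc k" "z$k \<cdot>\<^sub>v unit_vec N k"] smult[of "unit_vec N k" "z$k"]
      by (simp add: trunc_carrier)
  qed
  moreover have "trunc N = z"
    using z by (intro eq_vecI) (auto simp: trunc_def)
  ultimately show ?thesis by auto
qed

lemma mat_of_linear_map_mult:
  fixes f :: "real vec \<Rightarrow> real vec"
  assumes carrier: "\<And>x. x \<in> carrier_vec N \<Longrightarrow> f x \<in> carrier_vec M"
    and add: "\<And>x y. x \<in> carrier_vec N \<Longrightarrow> y \<in> carrier_vec N \<Longrightarrow> f (x + y) = f x + f y"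
    and smult: "\<And>c x. x \<in> carrier_vec N \<Longrightarrow> f (c \<cdot>\<^sub>v x) = c \<cdot>\<^sub>v f x"
    and z: "z \<in> carrier_vec N"
  shows "mat M N (\<lambda>(i,j). f (unit_vec N j) $ i) *\<^sub>v z = f z"
proof (rule eq_vecI)
  fix i assume "i < dim_vec (f z)"
  then have i: "i < M" using carrier[OF z] by simp
  have "f z $ i = (\<Sum>j<N. z$j * f (unit_vec N j) $ i)"
  proof (rule linear_functional_sum_unit_vec[where f = "\<lambda>z. f z $ i", OF _ _ z])
    fix x y :: "real vec" assume "x \<in> carrier_vec N" "y \<in> carrier_vec N"
    then show "f (x + y) $ i = f x $ i + f y $ i"
      using add[of x y] carrier[of x] carrier[of y] i by simp
  next
    fix c and x :: "real vec" assume "x \<in> carrier_vec N"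
    then show "f (c \<cdot>\<^sub>v x) $ i = c * f x $ i"
      using smult[of x c] carrier[of x] i by simp
  qed
  then show "(mat M N (\<lambda>(i,j). f (unit_vec N j) $ i) *\<^sub>v z) $ i = f z $ i"
    using i z by (simp add: scalar_prod_def atLeast0LessThan mult.commute)
qed (use carrier[OF z] in simp)

lemma mat_inverse_if_det_nonzero:
  assumes A: "A \<in> carrier_mat n n" and det: "det A \<noteq> (0 :: 'a :: field)"
  shows "the (mat_inverse A) \<in> carrier_mat n n" "A * the (mat_inverse A) = 1\<^sub>m n"
    "the (mat_inverse A) * A = 1\<^sub>m n"
proof -
  have "A \<in> Units (ring_mat TYPE('a) n ())"
    by (rule det_non_zero_imp_unit[OF A det])
  then obtain B where "mat_inverse A = Some B"
    using mat_inverse(1)[OF A, where b = "()"] by (cases "mat_inverse A") auto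
  then show "the (mat_inverse A) \<in> carrier_mat n n" "A * the (mat_inverse A) = 1\<^sub>m n"
    "the (mat_inverse A) * A = 1\<^sub>m n"
    using mat_inverse(2)[OF A] by auto
qed

lemma pd_mat_det_nonzero: "pd_mat P n \<Longrightarrow> det P \<noteq> 0"
  unfolding pd_mat_def using det_0_iff_vec_prod_zero[of P n] by force

lemma mult_mat_vec_uminus:
  "A \<in> carrier_mat r c \<Longrightarrow> v \<in> carrier_vec c \<Longrightarrow> A *\<^sub>v (- v) = - (A *\<^sub>v (v :: real vec))"
  by (intro eq_vecI) (auto simp: scalar_prod_uminus_right)

lemma scalar_prod_uminus_mat_vec:
  "A \<in> carrier_mat r c \<Longrightarrow> x \<in> carrier_vec r \<Longrightarrow> y \<in> carrier_vec c \<Longrightarrow>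
    x \<bullet> ((- A) *\<^sub>v y) = - (x \<bullet> (A *\<^sub>v (y :: real vec)))"
  by (subst uminus_mult_mat_vec) (auto intro!: scalar_prod_uminus_right)

lemma scalar_prod_minus_mat_vec:
  "A \<in> carrier_mat r c \<Longrightarrow> B \<in> carrier_mat r c \<Longrightarrow> x \<in> carrier_vec r \<Longrightarrow> y \<in> carrier_vec c \<Longrightarrow>
    x \<bullet> ((A - B) *\<^sub>v y) = x \<bullet> (A *\<^sub>v y) - x \<bullet> (B *\<^sub>v (y :: real vec))"
  by (subst minus_mult_distrib_mat_vec[of A r c]) (auto intro!: scalar_prod_minus_distrib[of _ r])

lemma scalar_prod_add_mat_vec:
  "A \<in> carrier_mat r c \<Longrightarrow> B \<in> carrier_mat r c \<Longrightarrow> x \<in> carrier_vec r \<Longrightarrow> y \<in> carrier_vec c \<Longrightarrow>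
    x \<bullet> ((A + B) *\<^sub>v y) = x \<bullet> (A *\<^sub>v y) + x \<bullet> (B *\<^sub>v (y :: real vec))"
  by (subst add_mult_distrib_mat_vec[of A r c]) (auto intro!: scalar_prod_add_distrib[of _ r])

lemma scalar_prod_mult_mat_vec_assoc:
  assumes A: "A \<in> carrier_mat r q" and B: "B \<in> carrier_mat q c"
    and x: "x \<in> carrier_vec r" and y: "y \<in> carrier_vec c"
  shows "x \<bullet> ((A * B) *\<^sub>v y) = (A\<^sup>T *\<^sub>v x) \<bullet> (B *\<^sub>v (y :: real vec))"
  using A B x y by (simp add: transpose_vec_mult_scalar[of A r q])

lemma smult_mat_mult_vec:
  "A \<in> carrier_mat r c \<Longrightarrow> v \<in> carrier_vec c \<Longrightarrow> (a \<cdot>\<^sub>m A) *\<^sub>v v = a \<cdot>\<^sub>v (A *\<^sub>v (v :: 'a :: comm_ring vec))"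
  by (intro eq_vecI) (auto simp: scalar_prod_def sum_distrib_left mult.assoc)

lemma smult_pow_mat:
  assumes "(A :: 'a :: comm_ring_1 mat) \<in> carrier_mat n n"
  shows "(c \<cdot>\<^sub>m A) ^\<^sub>m k = c ^ k \<cdot>\<^sub>m A ^\<^sub>m k"
proof (induction k)
  case 0 then show ?case by (intro eq_matI) auto
next
  case (Suc k)
  have "(c \<cdot>\<^sub>m A) ^\<^sub>m Suc k = (c ^ k \<cdot>\<^sub>m A ^\<^sub>m k) * (c \<cdot>\<^sub>m A)" using Suc by simp
  also have "\<dots> = c ^ Suc k \<cdot>\<^sub>m (A ^\<^sub>m k * A)"
    using assms by (simp add: mult_smult_assoc_mat[of _ n n _ n] mult_smult_distrib[of _ n n _ n])
      (intro eq_matI, auto simp: ac_simps)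
  finally show ?case by simp
qed

lemma eigenvalue_smult_mat:
  assumes A: "A \<in> carrier_mat n n" and c: "c \<noteq> (0 :: 'a :: field)" and ev: "eigenvalue (c \<cdot>\<^sub>m A) mu"
  shows "eigenvalue A (mu / c)"
proof -
  obtain v where v: "v \<in> carrier_vec n" "v \<noteq> 0\<^sub>v n" "(c \<cdot>\<^sub>m A) *\<^sub>v v = mu \<cdot>\<^sub>v v"
    using ev A unfolding eigenvalue_def eigenvector_def by auto
  then have "c \<cdot>\<^sub>v (A *\<^sub>v v) = mu \<cdot>\<^sub>v v"
    using A by (simp add: smult_mat_mult_vec)
  then have "(1 / c) \<cdot>\<^sub>v (c \<cdot>\<^sub>v (A *\<^sub>v v)) = (mu / c) \<cdot>\<^sub>v v"
    by (simp add: smult_smult_assoc)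
  then have "A *\<^sub>v v = (mu / c) \<cdot>\<^sub>v v"
    using c by (simp add: smult_smult_assoc)
  then show ?thesis
    unfolding eigenvalue_def eigenvector_def using v A by auto
qed

lemma mult_pow_mat_commute: "A \<in> carrier_mat n n \<Longrightarrow> A * A ^\<^sub>m k = A ^\<^sub>m k * A"
proof (induction k)
  case (Suc k)
  have "A * A ^\<^sub>m Suc k = (A * A ^\<^sub>m k) * A"
    using Suc.prems by (simp add: assoc_mult_mat[of _ n n _ n _ n] pow_carrier_mat)
  also have "\<dots> = A ^\<^sub>m Suc k * A" using Suc by simp
  finally show ?case .
qed simp

lemma mult_mat_vec_index_delta:
  assumes A: "A \<in> carrier_mat r c" and v: "v \<in> carrier_vec c" and i: "i < r"
    and entries: "\<And>j. j < c \<Longrightarrow> A $$ (i,j) = (if j = t \<and> Q then 1 else 0)"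
  shows "(A *\<^sub>v v) $ i = (if t < c \<and> Q then v $ t else (0 :: 'a :: comm_ring_1))"
proof -
  have "(A *\<^sub>v v) $ i = (\<Sum>j<c. (if j = t \<and> Q then v $ j else 0))"
    using A v i entries by (auto simp: scalar_prod_def atLeast0LessThan intro!: sum.cong)
  then show ?thesis by auto
qed

lemma sum_lessThan_mult_blocks:
  fixes f :: "nat \<Rightarrow> 'a :: comm_monoid_add"
  shows "(\<Sum>i<k*N. f i) = (\<Sum>b<k. \<Sum>i<N. f (b*N + i))"
proof (induction k)
  case (Suc k)
  have split: "(\<Sum>i<a + b. f i) = (\<Sum>i<a. f i) + (\<Sum>i<b. f (a + i))" for a b
    by (induction b) (simp_all add: add.assoc)
  show ?case
    using split[of "k*N" N] Suc by (simp add: add.commute)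
qed simp

lemma block3_quadratic_form:
  assumes M: "\<And>i j. i < 3 \<Longrightarrow> j < 3 \<Longrightarrow> M i j \<in> carrier_mat N N"
    and v: "\<And>i. i < 3 \<Longrightarrow> v i \<in> carrier_vec N"
  defines "w \<equiv> vec (3*N) (\<lambda>k. v (k div N) $ (k mod N))"
  shows "w \<bullet> (block3 N M *\<^sub>v w) = (\<Sum>i<3. \<Sum>j<3. v i \<bullet> (M i j *\<^sub>v v j))"
proof -
  have idx: "i*N + a < 3*N" if "i < 3" "a < N" for i a
  proof -
    have "i*N \<le> 2*N" using that by (intro mult_le_mono1) simp
    then show ?thesis using that by linarith
  qed
  have w_entry: "w $ (i*N + a) = v i $ a" if "i < 3" "a < N" for i a
    using idx[OF that] that by (simp add: w_def)
  have block_entry: "block3 N M $$ (i*N + a, j*N + b) = M i j $$ (a,b)"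
    if "i < 3" "a < N" "j < 3" "b < N" for i j a b
    using idx that by (simp add: block3_def)
  have "w \<bullet> (block3 N M *\<^sub>v w) = (\<Sum>k<3*N. \<Sum>k'<3*N. w$k * block3 N M $$ (k,k') * w$k')"
    by (rule scalar_prod_mult_mat_vec_sum) (simp_all add: w_def block3_def)
  also have "\<dots> = (\<Sum>i<3. \<Sum>a<N. \<Sum>j<3. \<Sum>b<N.
      w$(i*N+a) * block3 N M $$ (i*N+a, j*N+b) * w$(j*N+b))"
    by (simp only: sum_lessThan_mult_blocks)
  also have "\<dots> = (\<Sum>i<3. \<Sum>j<3. \<Sum>a<N. \<Sum>b<N. v i $ a * M i j $$ (a,b) * v j $ b)"
    by (rule sum.cong[OF refl], subst sum.swap) (simp add: w_entry block_entry)
  also have "\<dots> = (\<Sum>i<3. \<Sum>j<3. v i \<bullet> (M i j *\<^sub>v v j))"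
    using M v by (intro sum.cong refl) (simp add: scalar_prod_mult_mat_vec_sum[of _ N N])
  finally show ?thesis .
qed

lemma quadratic_form_Th_blocks:
  assumes Th: "Th \<in> carrier_mat (p + N) (p + N)" and Th_sym: "Th\<^sup>T = Th"
    and s: "s \<in> carrier_vec p" and g: "g \<in> carrier_vec N"
  shows "(s @\<^sub>v g) \<bullet> (Th *\<^sub>v (s @\<^sub>v g)) =
    s \<bullet> (Th11 p Th *\<^sub>v s) + 2 * (s \<bullet> (Th12 p N Th *\<^sub>v g)) + g \<bullet> (Th22 p N Th *\<^sub>v g)"
proof -
  have sym: "Th $$ (i, j) = Th $$ (j, i)" if "i < p + N" "j < p + N" for i j
    using that Th arg_cong[OF Th_sym, of "\<lambda>M. M $$ (i, j)"] by simp
  have blocks: "Th = four_block_mat (Th11 p Th) (Th12 p N Th) (Th12 p N Th)\<^sup>T (Th22 p N Th)"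
    using Th by (intro eq_matI) (auto simp: Th11_def Th12_def Th22_def sym)
  have c: "Th11 p Th \<in> carrier_mat p p" "Th12 p N Th \<in> carrier_mat p N" "Th22 p N Th \<in> carrier_mat N N"
    by (simp_all add: Th11_def Th12_def Th22_def)
  have "Th *\<^sub>v (s @\<^sub>v g) = (Th11 p Th *\<^sub>v s + Th12 p N Th *\<^sub>v g) @\<^sub>v
      ((Th12 p N Th)\<^sup>T *\<^sub>v s + Th22 p N Th *\<^sub>v g)"
    by (subst blocks, rule four_block_mat_mult_vec) (use s g c in auto)
  then have "(s @\<^sub>v g) \<bullet> (Th *\<^sub>v (s @\<^sub>v g)) =
      s \<bullet> (Th11 p Th *\<^sub>v s + Th12 p N Th *\<^sub>v g) + g \<bullet> ((Th12 p N Th)\<^sup>T *\<^sub>v s + Th22 p N Th *\<^sub>v g)"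
    using s g c by (simp add: scalar_prod_append[of _ p _ N])
  also have "\<dots> = s \<bullet> (Th11 p Th *\<^sub>v s) + s \<bullet> (Th12 p N Th *\<^sub>v g) +
      (g \<bullet> ((Th12 p N Th)\<^sup>T *\<^sub>v s) + g \<bullet> (Th22 p N Th *\<^sub>v g))"
    using s g c by (simp add: scalar_prod_add_distrib[of _ p] scalar_prod_add_distrib[of _ N])
  also have "g \<bullet> ((Th12 p N Th)\<^sup>T *\<^sub>v s) = s \<bullet> (Th12 p N Th *\<^sub>v g)"
    by (rule scalar_prod_transpose_swap[OF c(2) s g])
  finally show ?thesis by simp
qed

lemma gram_le_if_psd_diff:
  assumes psd: "psd_mat (Th - D * D\<^sup>T) n" and Th: "Th \<in> carrier_mat n n"
    and D: "(D :: real mat) \<in> carrier_mat n c" and v: "v \<in> carrier_vec n"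
  shows "(\<Sum>j<c. (col D j \<bullet> v)^2) \<le> v \<bullet> (Th *\<^sub>v v)"
proof -
  have "0 \<le> v \<bullet> ((Th - D * D\<^sup>T) *\<^sub>v v)"
    using psd v by (simp add: psd_mat_def)
  also have "\<dots> = v \<bullet> (Th *\<^sub>v v) - v \<bullet> ((D * D\<^sup>T) *\<^sub>v v)"
    using Th D v by (intro scalar_prod_minus_mat_vec) auto
  also have "v \<bullet> ((D * D\<^sup>T) *\<^sub>v v) = (\<Sum>j<c. (col D j \<bullet> v)^2)"
    by (rule scalar_prod_gram_sum[OF D v])
  finally show ?thesis by simp
qed

definition mat_sq_bound :: "real mat \<Rightarrow> real" where
  "mat_sq_bound M = (\<Sum>i<dim_row M. (\<Sum>j<dim_col M. \<bar>M$$(i,j)\<bar>)^2)"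

lemma mat_sq_bound_nonneg: "0 \<le> mat_sq_bound M"
  by (simp add: mat_sq_bound_def sum_nonneg)

lemma mult_mat_vec_sq_le:
  assumes M: "M \<in> carrier_mat r c" and v: "v \<in> carrier_vec c"
  shows "(M *\<^sub>v v) \<bullet> (M *\<^sub>v v) \<le> mat_sq_bound M * (v \<bullet> v)"
proof -
  define nv where "nv = sqrt (v \<bullet> v)"
  have entry: "\<bar>v$j\<bar> \<le> nv" if "j < c" for j
  proof -
    have "(v$j)^2 \<le> (\<Sum>i<c. (v$i)^2)"
      using that by (intro member_le_sum) auto
    then have "sqrt ((v$j)^2) \<le> nv"
      unfolding nv_def scalar_prod_self_sum[OF v] by (rule real_sqrt_le_mono)
    then show ?thesis by simp
  qed
  have row: "((M *\<^sub>v v) $ i)^2 \<le> ((\<Sum>j<c. \<bar>M$$(i,j)\<bar>) * nv)^2" if "i < r" for i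
  proof -
    have "\<bar>(M *\<^sub>v v) $ i\<bar> = \<bar>\<Sum>j<c. M$$(i,j) * v$j\<bar>"
      using M v that by (simp add: scalar_prod_def row_def atLeast0LessThan)
    also have "\<dots> \<le> (\<Sum>j<c. \<bar>M$$(i,j) * v$j\<bar>)"
      by (rule sum_abs)
    also have "\<dots> \<le> (\<Sum>j<c. \<bar>M$$(i,j)\<bar> * nv)"
      unfolding abs_mult by (intro sum_mono mult_left_mono entry) auto
    finally have "\<bar>(M *\<^sub>v v) $ i\<bar> \<le> (\<Sum>j<c. \<bar>M$$(i,j)\<bar>) * nv"
      by (simp only: sum_distrib_right)
    from power_mono[OF this abs_ge_zero, of 2] show ?thesis
      by (simp only: power2_abs)
  qed
  have "(M *\<^sub>v v) \<bullet> (M *\<^sub>v v) = (\<Sum>i<r. ((M *\<^sub>v v) $ i)^2)"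
    using M v by (intro scalar_prod_self_sum) auto
  also have "\<dots> \<le> (\<Sum>i<r. ((\<Sum>j<c. \<bar>M$$(i,j)\<bar>) * nv)^2)"
    by (intro sum_mono row) auto
  also have "\<dots> = (\<Sum>i<r. (\<Sum>j<c. \<bar>M$$(i,j)\<bar>)^2) * nv^2"
    unfolding power_mult_distrib by (rule sum_distrib_right[symmetric])
  also have "\<dots> = mat_sq_bound M * (v \<bullet> v)"
    using M by (simp add: mat_sq_bound_def nv_def scalar_prod_self_nonneg)
  finally show ?thesis .
qed

lemma mat_sq_bound_le:
  assumes M: "M \<in> carrier_mat r c" and entries: "\<And>i j. i < r \<Longrightarrow> j < c \<Longrightarrow> \<bar>M$$(i,j)\<bar> \<le> b"
  shows "mat_sq_bound M \<le> real r * (real c * b)^2"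
proof -
  have "(\<Sum>j<c. \<bar>M$$(i,j)\<bar>)^2 \<le> (real c * b)^2" if "i < r" for i
  proof -
    have "(\<Sum>j<c. \<bar>M$$(i,j)\<bar>) \<le> (\<Sum>j<c. b)"
      using that entries by (intro sum_mono) auto
    then show ?thesis
      by (intro power_mono) (auto simp: sum_nonneg)
  qed
  then have "(\<Sum>i<r. (\<Sum>j<c. \<bar>M$$(i,j)\<bar>)^2) \<le> (\<Sum>i<r. (real c * b)^2)"
    by (intro sum_mono) auto
  then show ?thesis
    using M by (simp add: mat_sq_bound_def)
qed

section \<open>Lyapunov functions and spectral radius\<close>

lemma eigenvector_real_imag_parts:
  fixes R :: "real mat"
  assumes R: "R \<in> carrier_mat N N" and w: "w \<in> carrier_vec N"
    and ev: "map_mat complex_of_real R *\<^sub>v w = lam \<cdot>\<^sub>v w"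
  defines "a \<equiv> vec N (\<lambda>i. Re (w $ i))" and "b \<equiv> vec N (\<lambda>i. Im (w $ i))"
  shows "R *\<^sub>v a = Re lam \<cdot>\<^sub>v a - Im lam \<cdot>\<^sub>v b" and "R *\<^sub>v b = Re lam \<cdot>\<^sub>v b + Im lam \<cdot>\<^sub>v a"
proof -
  have entry: "(\<Sum>j<N. complex_of_real (R $$ (i,j)) * w $ j) = lam * w $ i" if "i < N" for i
    using arg_cong[OF ev, of "\<lambda>v. v $ i"] that R w
    by (auto simp: scalar_prod_def atLeast0LessThan intro!: sum.cong)
  have R_entry: "(R *\<^sub>v x) $ i = (\<Sum>j<N. R $$ (i,j) * x $ j)" if "i < N" "x \<in> carrier_vec N" for i x
    using that R by (auto simp: scalar_prod_def atLeast0LessThan intro!: sum.cong)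
  show "R *\<^sub>v a = Re lam \<cdot>\<^sub>v a - Im lam \<cdot>\<^sub>v b"
  proof (rule eq_vecI)
    fix i assume "i < dim_vec (Re lam \<cdot>\<^sub>v a - Im lam \<cdot>\<^sub>v b)"
    then have i: "i < N" by (simp add: b_def)
    have "(R *\<^sub>v a) $ i = Re (\<Sum>j<N. complex_of_real (R $$ (i,j)) * w $ j)"
      using i by (simp add: R_entry a_def Re_sum)
    then show "(R *\<^sub>v a) $ i = (Re lam \<cdot>\<^sub>v a - Im lam \<cdot>\<^sub>v b) $ i"
      using i by (simp add: entry a_def b_def)
  qed (use R in \<open>simp add: b_def\<close>)
  show "R *\<^sub>v b = Re lam \<cdot>\<^sub>v b + Im lam \<cdot>\<^sub>v a"
  proof (rule eq_vecI)
    fix i assume "i < dim_vec (Re lam \<cdot>\<^sub>v b + Im lam \<cdot>\<^sub>v a)"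
    then have i: "i < N" by (simp add: a_def)
    have "(R *\<^sub>v b) $ i = Im (\<Sum>j<N. complex_of_real (R $$ (i,j)) * w $ j)"
      using i by (simp add: R_entry b_def Im_sum)
    then show "(R *\<^sub>v b) $ i = (Re lam \<cdot>\<^sub>v b + Im lam \<cdot>\<^sub>v a) $ i"
      using i by (simp add: entry a_def b_def)
  qed (use R in \<open>simp add: a_def\<close>)
qed

lemma quadratic_form_rotation:
  fixes P :: "real mat"
  assumes P: "P \<in> carrier_mat N N" and a: "a \<in> carrier_vec N" and b: "b \<in> carrier_vec N"
  shows "(\<alpha> \<cdot>\<^sub>v a - \<beta> \<cdot>\<^sub>v b) \<bullet> (P *\<^sub>v (\<alpha> \<cdot>\<^sub>v a - \<beta> \<cdot>\<^sub>v b)) +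
      (\<alpha> \<cdot>\<^sub>v b + \<beta> \<cdot>\<^sub>v a) \<bullet> (P *\<^sub>v (\<alpha> \<cdot>\<^sub>v b + \<beta> \<cdot>\<^sub>v a)) =
    (\<alpha>\<^sup>2 + \<beta>\<^sup>2) * (a \<bullet> (P *\<^sub>v a) + b \<bullet> (P *\<^sub>v b))"
proof -
  have "(\<alpha> \<cdot>\<^sub>v a - \<beta> \<cdot>\<^sub>v b) \<bullet> (P *\<^sub>v (\<alpha> \<cdot>\<^sub>v a - \<beta> \<cdot>\<^sub>v b)) +
      (\<alpha> \<cdot>\<^sub>v b + \<beta> \<cdot>\<^sub>v a) \<bullet> (P *\<^sub>v (\<alpha> \<cdot>\<^sub>v b + \<beta> \<cdot>\<^sub>v a)) =
    (\<Sum>i<N. \<Sum>j<N. (\<alpha> * a$i - \<beta> * b$i) * P$$(i,j) * (\<alpha> * a$j - \<beta> * b$j)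
      + (\<alpha> * b$i + \<beta> * a$i) * P$$(i,j) * (\<alpha> * b$j + \<beta> * a$j))"
    using P a b by (simp add: scalar_prod_mult_mat_vec_sum[OF P] sum.distrib)
  also have "\<dots> = (\<Sum>i<N. \<Sum>j<N. (\<alpha>\<^sup>2 + \<beta>\<^sup>2) * (a$i * P$$(i,j) * a$j + b$i * P$$(i,j) * b$j))"
    by (intro sum.cong refl) (simp add: algebra_simps power2_eq_square)
  also have "\<dots> = (\<alpha>\<^sup>2 + \<beta>\<^sup>2) * (a \<bullet> (P *\<^sub>v a) + b \<bullet> (P *\<^sub>v b))"
    by (simp add: scalar_prod_mult_mat_vec_sum[OF P a a] scalar_prod_mult_mat_vec_sum[OF P b b]
        sum_distrib_left distrib_left sum.distrib)
  finally show ?thesis .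
qed

text \<open>Split a complex eigenvector of \<open>R\<close> into real and imaginary parts \<open>a\<close>, \<open>b\<close>: the
  Lyapunov function \<open>V(a) + V(b)\<close> is multiplied by exactly \<open>\<bar>\<lambda>\<bar>\<^sup>2\<close> under \<open>R\<close>.\<close>

lemma lyapunov_eigenvalue_norm_less_1:
  fixes R P :: "real mat"
  assumes R: "R \<in> carrier_mat N N" and P: "pd_mat P N"
    and decrease: "\<And>x. x \<in> carrier_vec N \<Longrightarrow> x \<noteq> 0\<^sub>v N \<Longrightarrow>
      (R *\<^sub>v x) \<bullet> (P *\<^sub>v (R *\<^sub>v x)) < x \<bullet> (P *\<^sub>v x)"
    and ev: "eigenvalue (map_mat complex_of_real R) lam"
  shows "cmod lam < 1"
proof -
  obtain w where w: "w \<in> carrier_vec N" "w \<noteq> 0\<^sub>v N" "map_mat complex_of_real R *\<^sub>v w = lam \<cdot>\<^sub>v w"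
    using ev R unfolding eigenvalue_def eigenvector_def by auto
  define a where "a = vec N (\<lambda>i. Re (w $ i))"
  define b where "b = vec N (\<lambda>i. Im (w $ i))"
  have a: "a \<in> carrier_vec N" and b: "b \<in> carrier_vec N" by (simp_all add: a_def b_def)
  have P_carrier: "P \<in> carrier_mat N N" using P by (simp add: pd_mat_def)
  define V where "V x = x \<bullet> (P *\<^sub>v x)" for x
  have V_pos: "0 < V x" if "x \<in> carrier_vec N" "x \<noteq> 0\<^sub>v N" for x
    using P that by (simp add: V_def pd_mat_def)
  have "R *\<^sub>v 0\<^sub>v N = 0\<^sub>v N"
    using R by (intro eq_vecI) auto
  then have V_zero: "V (0\<^sub>v N) = 0" "V (R *\<^sub>v 0\<^sub>v N) = 0"
    using P_carrier by (simp_all add: V_def)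
  have "a \<noteq> 0\<^sub>v N \<or> b \<noteq> 0\<^sub>v N"
  proof (rule ccontr)
    assume "\<not> ?thesis"
    then have "a $ i = 0" "b $ i = 0" if "i < N" for i
      using that by auto
    then have "w $ i = 0" if "i < N" for i
      using that by (simp add: a_def b_def complex_eq_iff)
    then show False using w(1,2) by (metis eq_vecI carrier_vecD index_zero_vec)
  qed
  then have strict: "V (R *\<^sub>v a) + V (R *\<^sub>v b) < V a + V b" and positive: "0 < V a + V b"
    using decrease[OF a] decrease[OF b] V_pos[OF a] V_pos[OF b] V_zero unfolding V_def
    by (smt (verit) mult_left_less_imp_less)+
  have Ra: "R *\<^sub>v a = Re lam \<cdot>\<^sub>v a - Im lam \<cdot>\<^sub>v b" and Rb: "R *\<^sub>v b = Re lam \<cdot>\<^sub>v b + Im lam \<cdot>\<^sub>v a"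
    using eigenvector_real_imag_parts[OF R w(1,3)] by (simp_all add: a_def b_def)
  have "V (R *\<^sub>v a) + V (R *\<^sub>v b) = ((Re lam)\<^sup>2 + (Im lam)\<^sup>2) * (V a + V b)"
    unfolding V_def Ra Rb by (rule quadratic_form_rotation[OF P_carrier a b])
  with strict have "((Re lam)\<^sup>2 + (Im lam)\<^sup>2) * (V a + V b) < 1 * (V a + V b)"
    by simp
  then have "(Re lam)\<^sup>2 + (Im lam)\<^sup>2 < 1"
    using positive by (simp only: mult_less_cancel_right_pos)
  then show ?thesis by (simp add: cmod_def)
qed

text \<open>Scaling \<open>A\<close> by \<open>g = 2 / (1 + \<rho>(A))\<close> keeps the spectral radius below \<open>1\<close>, so the
  powers of \<open>g A\<close> stay bounded.\<close>

lemma spectral_radius_less_1_powers_decay: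
  fixes A :: "complex mat"
  assumes A: "A \<in> carrier_mat N N" and N: "0 < N" and sr: "spectral_radius A < 1"
  shows "\<exists>C g. 1 < g \<and> (\<forall>k i j. i < N \<longrightarrow> j < N \<longrightarrow> cmod ((A ^\<^sub>m k) $$ (i,j)) \<le> C / g ^ k)"
proof -
  define r where "r = spectral_radius A"
  have r0: "0 \<le> r"
    using spectral_radius_mem_max(1)[OF A N] by (auto simp: r_def)
  define g where "g = 2 / (1 + r)"
  have g1: "1 < g" and gr: "g * r < 1"
    using sr r0 by (auto simp: g_def r_def field_simps)
  define A' where "A' = complex_of_real g \<cdot>\<^sub>m A"
  have A': "A' \<in> carrier_mat N N" using A by (simp add: A'_def)
  have "spectral_radius A' < 1"
  proof -
    obtain mu where mu: "eigenvalue A' mu" "spectral_radius A' = cmod mu"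
      using spectral_radius_mem_max(1)[OF A' N] unfolding spectrum_def by auto
    have "complex_of_real g \<noteq> 0" using g1 by simp
    from eigenvalue_smult_mat[OF A this mu(1)[unfolded A'_def]]
    have "eigenvalue A (mu / complex_of_real g)" .
    then have "cmod (mu / complex_of_real g) \<le> r"
      using spectral_radius_mem_max(2)[OF A N] unfolding r_def spectrum_def by auto
    then have "cmod mu \<le> g * r" using g1 by (simp add: norm_divide field_simps)
    then show ?thesis using mu(2) gr by simp
  qed
  then obtain c where c: "\<And>k. norm_bound (A' ^\<^sub>m k) c"
    using spectral_radius_jnf_norm_bound_less_1_upper_triangular[OF A'] by auto
  show ?thesis
  proof (intro exI conjI allI impI)
    fix k i j assume i: "i < N" and j: "j < N"
    have "(A' ^\<^sub>m k) $$ (i,j) = complex_of_real (g ^ k) * (A ^\<^sub>m k) $$ (i,j)"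
      using i j A by (simp add: A'_def smult_pow_mat pow_carrier_mat)
    moreover have "cmod ((A' ^\<^sub>m k) $$ (i,j)) \<le> c"
      using c[of k] i j A' unfolding norm_bound_def by (simp add: pow_carrier_mat)
    ultimately have "g ^ k * cmod ((A ^\<^sub>m k) $$ (i,j)) \<le> c"
      using g1 by (simp add: norm_mult norm_power)
    then show "cmod ((A ^\<^sub>m k) $$ (i,j)) \<le> c / g ^ k"
      using g1 by (simp add: field_simps)
  qed (rule g1)
qed

lemma lyapunov_powers_decay:
  fixes Phi P :: "real mat"
  assumes Phi: "Phi \<in> carrier_mat N N" and P: "pd_mat P N"
    and decrease: "\<And>a. a \<in> carrier_vec N \<Longrightarrow> a \<noteq> 0\<^sub>v N \<Longrightarrow>
      (Phi\<^sup>T *\<^sub>v a) \<bullet> (P *\<^sub>v (Phi\<^sup>T *\<^sub>v a)) < a \<bullet> (P *\<^sub>v a)"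
  shows "\<exists>C g. 1 < g \<and> (\<forall>k i j. i < N \<longrightarrow> j < N \<longrightarrow> \<bar>(Phi ^\<^sub>m k) $$ (i,j)\<bar> \<le> C / g ^ k)"
proof (cases "N = 0")
  case True
  then show ?thesis by (intro exI[of _ 0] exI[of _ 2]) auto
next
  case False
  define Pc where "Pc = map_mat complex_of_real Phi"
  have Pc: "Pc \<in> carrier_mat N N" using Phi by (simp add: Pc_def)
  have "spectral_radius Pc < 1"
  proof -
    obtain lam where lam: "eigenvalue Pc lam" "spectral_radius Pc = cmod lam"
      using spectral_radius_mem_max(1)[OF Pc] False unfolding spectrum_def by auto
    have "poly (char_poly (Pc\<^sup>T)) lam = 0"
      using lam(1) eigenvalue_root_char_poly[OF Pc] Pc by simp
    then have "eigenvalue (map_mat complex_of_real (Phi\<^sup>T)) lam"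
      using eigenvalue_root_char_poly[of "Pc\<^sup>T" N] Pc by (simp add: Pc_def map_mat_transpose)
    then show ?thesis
      using lyapunov_eigenvalue_norm_less_1[of "Phi\<^sup>T" N P lam] Phi P decrease lam(2) by simp
  qed
  then obtain C g where g: "1 < g"
    and decay: "\<And>k i j. i < N \<Longrightarrow> j < N \<Longrightarrow> cmod ((Pc ^\<^sub>m k) $$ (i,j)) \<le> C / g ^ k"
    using spectral_radius_less_1_powers_decay[OF Pc] False by blast
  have "Pc ^\<^sub>m k = map_mat complex_of_real (Phi ^\<^sub>m k)" for k
    unfolding Pc_def by (rule of_real_hom.mat_hom_pow[OF Phi, symmetric])
  then have "\<bar>(Phi ^\<^sub>m k) $$ (i,j)\<bar> \<le> C / g ^ k" if "i < N" "j < N" for k i j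
    using decay[OF that, of k] that Phi by (simp add: pow_carrier_mat)
  then show ?thesis using g by blast
qed

section \<open>The design LMI\<close>

lemma lmi_coupling_identity:
  fixes P Y K F Bl L G :: "real mat"
  assumes P: "P \<in> carrier_mat N N" and P_sym: "P\<^sup>T = P" and KP: "K * P = Y" and K: "K \<in> carrier_mat m N"
    and F: "F \<in> carrier_mat N N" and Bl: "Bl \<in> carrier_mat N m"
    and L: "L \<in> carrier_mat N p" and G: "G \<in> carrier_mat p N"
    and a: "a \<in> carrier_vec N" and b: "b \<in> carrier_vec N"
  shows "a \<bullet> ((F * P + Bl * Y) *\<^sub>v b) + b \<bullet> (P *\<^sub>v (G\<^sup>T *\<^sub>v (L\<^sup>T *\<^sub>v a))) =
    ((F + Bl * K + L * G)\<^sup>T *\<^sub>v a) \<bullet> (P *\<^sub>v b)"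
proof -
  define Pb where "Pb = P *\<^sub>v b"
  have Pb: "Pb \<in> carrier_vec N" using P b by (simp add: Pb_def)
  have FBK: "F + Bl * K \<in> carrier_mat N N" using F Bl K by simp
  have "F * P + Bl * Y = (F + Bl * K) * P"
    using F Bl K P by (simp add: add_mult_distrib_mat[of _ N N] assoc_mult_mat[of Bl N m K N P N] KP)
  then have "a \<bullet> ((F * P + Bl * Y) *\<^sub>v b) = a \<bullet> ((F + Bl * K) *\<^sub>v Pb)"
    using FBK P b by (simp add: Pb_def)
  moreover have "b \<bullet> (P *\<^sub>v (G\<^sup>T *\<^sub>v (L\<^sup>T *\<^sub>v a))) = a \<bullet> ((L * G) *\<^sub>v Pb)"
  proof -
    have "G\<^sup>T *\<^sub>v (L\<^sup>T *\<^sub>v a) \<in> carrier_vec N"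
      using G L by (auto intro!: carrier_vecI)
    then have "b \<bullet> (P *\<^sub>v (G\<^sup>T *\<^sub>v (L\<^sup>T *\<^sub>v a))) = (G\<^sup>T *\<^sub>v (L\<^sup>T *\<^sub>v a)) \<bullet> Pb"
      using scalar_prod_transpose_swap[OF P b] P_sym by (simp add: Pb_def)
    also have "\<dots> = (L\<^sup>T *\<^sub>v a) \<bullet> (G *\<^sub>v Pb)"
      using G L Pb a by (simp add: transpose_vec_mult_scalar[of G p N])
    also have "\<dots> = a \<bullet> ((L * G) *\<^sub>v Pb)"
      using L G a Pb by (simp add: transpose_vec_mult_scalar[of L N p])
    finally show ?thesis .
  qed
  ultimately have "a \<bullet> ((F * P + Bl * Y) *\<^sub>v b) + b \<bullet> (P *\<^sub>v (G\<^sup>T *\<^sub>v (L\<^sup>T *\<^sub>v a))) =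
      a \<bullet> ((F + Bl * K + L * G) *\<^sub>v Pb)"
    using FBK L G a Pb by (simp add: scalar_prod_add_mat_vec[of _ N N])
  also have "\<dots> = ((F + Bl * K + L * G)\<^sup>T *\<^sub>v a) \<bullet> Pb"
    using FBK L G a Pb by (simp add: transpose_vec_mult_scalar[of _ N N])
  finally show ?thesis by (simp add: Pb_def)
qed

lemma lmi_block_form:
  fixes P Y F Bl L Aq Bq Cq :: "real mat"
  assumes P: "P \<in> carrier_mat N N" and P_sym: "P\<^sup>T = P" and Y: "Y \<in> carrier_mat m N"
    and F: "F \<in> carrier_mat N N" and Bl: "Bl \<in> carrier_mat N m" and L: "L \<in> carrier_mat N p"
    and Aq: "Aq \<in> carrier_mat N N" and Bq: "Bq \<in> carrier_mat p N" and Cq: "Cq \<in> carrier_mat p p"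
    and a: "a \<in> carrier_vec N" and b: "b \<in> carrier_vec N" and g: "g \<in> carrier_vec N"
  defines "M \<equiv> \<lambda>(i::nat) (j::nat).
                   if i = 0 \<and> j = 0 then - P - L * Cq * L\<^sup>T
                   else if i = 0 \<and> j = 1 then F * P + Bl * Y
                   else if i = 0 \<and> j = 2 then L * Bq
                   else if i = 1 \<and> j = 0 then P * F\<^sup>T + Y\<^sup>T * Bl\<^sup>T
                   else if i = 1 \<and> j = 1 then - P
                   else if i = 1 \<and> j = 2 then - P
                   else if i = 2 \<and> j = 0 then Bq\<^sup>T * L\<^sup>T
                   else if i = 2 \<and> j = 1 then - P
                   else - Aq"
    and "v \<equiv> \<lambda>i::nat. if i = 0 then a else if i = 1 then b else - g"
    and "s \<equiv> L\<^sup>T *\<^sub>v a"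
  shows "(\<Sum>i<3. \<Sum>j<3. v i \<bullet> (M i j *\<^sub>v v j)) =
    - (a \<bullet> (P *\<^sub>v a)) - (s \<bullet> (Cq *\<^sub>v s) + 2 * (s \<bullet> (Bq *\<^sub>v g)) + g \<bullet> (Aq *\<^sub>v g))
    + 2 * (a \<bullet> ((F * P + Bl * Y) *\<^sub>v b) + b \<bullet> (P *\<^sub>v g)) - b \<bullet> (P *\<^sub>v b)"
proof -
  have s: "s \<in> carrier_vec p" using L a by (simp add: s_def)
  have P_swap: "x \<bullet> (P *\<^sub>v y) = y \<bullet> (P *\<^sub>v x)" if "x \<in> carrier_vec N" "y \<in> carrier_vec N" for x y
    using scalar_prod_transpose_swap[OF P that] P_sym by simp
  have t00: "v 0 \<bullet> (M 0 0 *\<^sub>v v 0) = - (a \<bullet> (P *\<^sub>v a)) - s \<bullet> (Cq *\<^sub>v s)"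
  proof -
    have "a \<bullet> ((L * Cq * L\<^sup>T) *\<^sub>v a) = a \<bullet> ((L * (Cq * L\<^sup>T)) *\<^sub>v a)"
      using L Cq by (simp add: assoc_mult_mat[of L N p Cq p])
    also have "\<dots> = s \<bullet> ((Cq * L\<^sup>T) *\<^sub>v a)"
      using L Cq a by (simp add: scalar_prod_mult_mat_vec_assoc[of L N p _ N] s_def)
    also have "\<dots> = s \<bullet> (Cq *\<^sub>v s)"
      using L Cq a by (simp add: s_def)
    finally show ?thesis
      using P L Cq a
      by (simp add: M_def v_def scalar_prod_minus_mat_vec[of _ N N] scalar_prod_uminus_mat_vec[of _ N N])
  qed
  have t10: "v 1 \<bullet> (M 1 0 *\<^sub>v v 0) = v 0 \<bullet> (M 0 1 *\<^sub>v v 1)"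
  proof -
    have "P * F\<^sup>T + Y\<^sup>T * Bl\<^sup>T = (F * P + Bl * Y)\<^sup>T"
      using F P Bl Y P_sym
      by (simp add: transpose_add[of _ N N] transpose_mult[of _ N N _ N] transpose_mult[of _ N m _ N])
    then show ?thesis
      using F P Bl Y a b by (simp add: M_def v_def scalar_prod_transpose_swap[of _ N N])
  qed
  have t02: "v 0 \<bullet> (M 0 2 *\<^sub>v v 2) = - (s \<bullet> (Bq *\<^sub>v g))"
    using L Bq a g
    by (simp add: M_def v_def s_def mult_mat_vec_uminus[of Bq p N] mult_mat_vec_uminus[of L N p]
        transpose_vec_mult_scalar[of L N p])
  have t20: "v 2 \<bullet> (M 2 0 *\<^sub>v v 0) = - (s \<bullet> (Bq *\<^sub>v g))"
  proof -
    have "v 2 \<bullet> (M 2 0 *\<^sub>v v 0) = - (g \<bullet> (Bq\<^sup>T *\<^sub>v s))"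
      using L Bq a g by (simp add: M_def v_def s_def)
    then show ?thesis
      using Bq s g by (simp add: scalar_prod_transpose_swap[of _ p N])
  qed
  have t11: "v 1 \<bullet> (M 1 1 *\<^sub>v v 1) = - (b \<bullet> (P *\<^sub>v b))"
    using P b by (simp add: M_def v_def scalar_prod_uminus_mat_vec[of _ N N])
  have t12: "v 1 \<bullet> (M 1 2 *\<^sub>v v 2) = b \<bullet> (P *\<^sub>v g)"
    using P b g by (simp add: M_def v_def scalar_prod_uminus_mat_vec[of _ N N] mult_mat_vec_uminus[of P N N])
  have t21: "v 2 \<bullet> (M 2 1 *\<^sub>v v 1) = b \<bullet> (P *\<^sub>v g)"
    using P b g by (simp add: M_def v_def scalar_prod_uminus_mat_vec[of _ N N] P_swap[OF g b])
  have t22: "v 2 \<bullet> (M 2 2 *\<^sub>v v 2) = - (g \<bullet> (Aq *\<^sub>v g))"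
    using Aq g by (simp add: M_def v_def scalar_prod_uminus_mat_vec[of _ N N] mult_mat_vec_uminus[of Aq N N])
  have t01: "v 0 \<bullet> (M 0 1 *\<^sub>v v 1) = a \<bullet> ((F * P + Bl * Y) *\<^sub>v b)"
    by (simp add: M_def v_def)
  show ?thesis
    using t00 t01 t10 t02 t20 t11 t12 t21 t22 by (simp add: eval_nat_numeral)
qed

lemma block3_nd_mat_quadratic_form:
  assumes nd: "nd_mat (block3 N M) (3 * N)"
    and M: "\<And>i j. i < 3 \<Longrightarrow> j < 3 \<Longrightarrow> M i j \<in> carrier_mat N N"
    and v: "\<And>i. i < 3 \<Longrightarrow> v i \<in> carrier_vec N" and v0: "v 0 \<noteq> 0\<^sub>v N"
  shows "(\<Sum>i<3. \<Sum>j<3. v i \<bullet> (M i j *\<^sub>v v j)) < 0"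
proof -
  define w where "w = vec (3*N) (\<lambda>k. v (k div N) $ (k mod N))"
  have w: "w \<in> carrier_vec (3*N)" by (simp add: w_def)
  have "w \<noteq> 0\<^sub>v (3*N)"
  proof
    assume w0: "w = 0\<^sub>v (3*N)"
    have "v 0 $ i = w $ i" if "i < N" for i
      using that by (simp add: w_def)
    then have "v 0 = 0\<^sub>v N" using v[of 0] w0 by (intro eq_vecI) auto
    then show False using v0 by simp
  qed
  then have "0 < w \<bullet> ((- block3 N M) *\<^sub>v w)"
    using nd w by (simp add: nd_mat_def pd_mat_def)
  then have "w \<bullet> (block3 N M *\<^sub>v w) < 0"
    using w scalar_prod_uminus_mat_vec[of "block3 N M" "3*N" "3*N" w w] by (simp add: block3_def)
  then show ?thesis
    using block3_quadratic_form[where M = M and v = v and N = N, OF M v] unfolding w_def by simp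
qed

text \<open>Evaluate the LMI at \<open>(a, \<Phi>\<^sup>T a, -G\<^sup>T L\<^sup>T a)\<close>: the two \<open>P\<close>-coupling terms recombine
  into \<open>(\<Phi>\<^sup>T a)\<^sup>T P (\<Phi>\<^sup>T a)\<close>, and the data inequality for \<open>G\<close> disposes of the rest.\<close>

lemma lmi_lyapunov_decrease:
  fixes P Y F Bl L G Aq Bq Cq :: "real mat"
  assumes P: "pd_mat P N" and Y: "Y \<in> carrier_mat m N"
    and F: "F \<in> carrier_mat N N" and Bl: "Bl \<in> carrier_mat N m"
    and L: "L \<in> carrier_mat N p" and G: "G \<in> carrier_mat p N"
    and Aq: "Aq \<in> carrier_mat N N" and Bq: "Bq \<in> carrier_mat p N" and Cq: "Cq \<in> carrier_mat p p"
    and qmi: "\<And>s. s \<in> carrier_vec p \<Longrightarrow>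
      s \<bullet> (Cq *\<^sub>v s) + 2 * (s \<bullet> (Bq *\<^sub>v (G\<^sup>T *\<^sub>v s))) + (G\<^sup>T *\<^sub>v s) \<bullet> (Aq *\<^sub>v (G\<^sup>T *\<^sub>v s)) \<le> 0"
    and lmi: "nd_mat (block3 N (\<lambda>i j.
                   if i = 0 \<and> j = 0 then - P - L * Cq * L\<^sup>T
                   else if i = 0 \<and> j = 1 then F * P + Bl * Y
                   else if i = 0 \<and> j = 2 then L * Bq
                   else if i = 1 \<and> j = 0 then P * F\<^sup>T + Y\<^sup>T * Bl\<^sup>T
                   else if i = 1 \<and> j = 1 then - P
                   else if i = 1 \<and> j = 2 then - P
                   else if i = 2 \<and> j = 0 then Bq\<^sup>T * L\<^sup>T
                   else if i = 2 \<and> j = 1 then - P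
                   else - Aq)) (3 * N)"
    and a: "a \<in> carrier_vec N" and a_nonzero: "a \<noteq> 0\<^sub>v N"
  defines "Phi \<equiv> F + Bl * (Y * the (mat_inverse P)) + L * G"
  shows "(Phi\<^sup>T *\<^sub>v a) \<bullet> (P *\<^sub>v (Phi\<^sup>T *\<^sub>v a)) < a \<bullet> (P *\<^sub>v a)"
proof -
  have P_carrier: "P \<in> carrier_mat N N" and P_sym: "P\<^sup>T = P"
    using P by (auto simp: pd_mat_def)
  define K where "K = Y * the (mat_inverse P)"
  have K: "K \<in> carrier_mat m N"
    using Y mat_inverse_if_det_nonzero(1)[OF P_carrier pd_mat_det_nonzero[OF P]] by (simp add: K_def)
  have KP: "K * P = Y"
    using Y P_carrier mat_inverse_if_det_nonzero[OF P_carrier pd_mat_det_nonzero[OF P]]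
    by (simp add: K_def assoc_mult_mat[of Y m N _ N P N])
  define b where "b = Phi\<^sup>T *\<^sub>v a"
  define g where "g = G\<^sup>T *\<^sub>v (L\<^sup>T *\<^sub>v a)"
  have b: "b \<in> carrier_vec N" and g: "g \<in> carrier_vec N"
    using F Bl K L G by (auto simp: b_def g_def Phi_def K_def[symmetric] intro!: carrier_vecI)
  define M where "M = (\<lambda>(i::nat) (j::nat).
                   if i = 0 \<and> j = 0 then - P - L * Cq * L\<^sup>T
                   else if i = 0 \<and> j = 1 then F * P + Bl * Y
                   else if i = 0 \<and> j = 2 then L * Bq
                   else if i = 1 \<and> j = 0 then P * F\<^sup>T + Y\<^sup>T * Bl\<^sup>T
                   else if i = 1 \<and> j = 1 then - P
                   else if i = 1 \<and> j = 2 then - P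
                   else if i = 2 \<and> j = 0 then Bq\<^sup>T * L\<^sup>T
                   else if i = 2 \<and> j = 1 then - P
                   else - Aq)"
  define v where "v i = (if i = 0 then a else if i = 1 then b else - g)" for i :: nat
  have M: "M i j \<in> carrier_mat N N" if "i < 3" "j < 3" for i j
  proof -
    have "i = 0 \<or> i = 1 \<or> i = 2" "j = 0 \<or> j = 1 \<or> j = 2" using that by auto
    then show ?thesis
      using P_carrier Y F Bl L Aq Bq Cq unfolding M_def by (elim disjE) auto
  qed
  have v: "v i \<in> carrier_vec N" for i
    using a b g by (simp add: v_def)
  have negative: "(\<Sum>i<3. \<Sum>j<3. v i \<bullet> (M i j *\<^sub>v v j)) < 0"
    using block3_nd_mat_quadratic_form[OF lmi[folded M_def] M v] a_nonzero by (simp add: v_def)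
  have "(\<Sum>i<3. \<Sum>j<3. v i \<bullet> (M i j *\<^sub>v v j)) = - (a \<bullet> (P *\<^sub>v a))
      - ((L\<^sup>T *\<^sub>v a) \<bullet> (Cq *\<^sub>v (L\<^sup>T *\<^sub>v a)) + 2 * ((L\<^sup>T *\<^sub>v a) \<bullet> (Bq *\<^sub>v g)) + g \<bullet> (Aq *\<^sub>v g))
      + 2 * (a \<bullet> ((F * P + Bl * Y) *\<^sub>v b) + b \<bullet> (P *\<^sub>v g)) - b \<bullet> (P *\<^sub>v b)"
    unfolding M_def v_def by (rule lmi_block_form[OF P_carrier P_sym Y F Bl L Aq Bq Cq a b g])
  moreover have "a \<bullet> ((F * P + Bl * Y) *\<^sub>v b) + b \<bullet> (P *\<^sub>v g) = b \<bullet> (P *\<^sub>v b)"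
    using lmi_coupling_identity[OF P_carrier P_sym KP K F Bl L G a b]
    by (simp add: g_def b_def Phi_def K_def)
  moreover have "(L\<^sup>T *\<^sub>v a) \<bullet> (Cq *\<^sub>v (L\<^sup>T *\<^sub>v a)) + 2 * ((L\<^sup>T *\<^sub>v a) \<bullet> (Bq *\<^sub>v g))
      + g \<bullet> (Aq *\<^sub>v g) \<le> 0"
    using qmi[of "L\<^sup>T *\<^sub>v a"] L a by (simp add: g_def)
  ultimately have "b \<bullet> (P *\<^sub>v b) < a \<bullet> (P *\<^sub>v a)"
    using negative by (smt (verit))
  then show ?thesis by (simp add: b_def)
qed

section \<open>Windows of a linear system\<close>

lemma block_index_less: "i < (m::nat) \<Longrightarrow> k < l \<Longrightarrow> k*m + i < m*l"
proof -
  assume "i < m" "k < l"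
  then have "k*m + i < Suc k * m" by simp
  also have "\<dots> \<le> l * m" using \<open>k < l\<close> by (intro mult_le_mono1) simp
  finally show ?thesis by (simp add: mult.commute)
qed

lemma stack_yu_carrier: "stack_yu p m l y u s \<in> carrier_vec (p*l + m*l)"
  by (simp add: stack_yu_def)

locale lti_window =
  fixes A B C :: "real mat" and nx m p l :: nat
  assumes A_carrier: "A \<in> carrier_mat nx nx" and B_carrier: "B \<in> carrier_mat nx m"
    and C_carrier: "C \<in> carrier_mat p nx"
begin

definition trajectory_on :: "(nat \<Rightarrow> real vec) \<Rightarrow> (nat \<Rightarrow> real vec) \<Rightarrow> nat \<Rightarrow> bool" where
  "trajectory_on x u s \<longleftrightarrow> x s \<in> carrier_vec nx \<and>
     (\<forall>k. s \<le> k \<longrightarrow> k < s + l \<longrightarrow> u k \<in> carrier_vec m \<and> x (Suc k) = A *\<^sub>v x k + B *\<^sub>v u k)"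

definition initial_data :: "(nat \<Rightarrow> real vec) \<Rightarrow> (nat \<Rightarrow> real vec) \<Rightarrow> nat \<Rightarrow> real vec" where
  "initial_data x u s = vec (nx + m*l) (\<lambda>i. if i < nx then x s $ i
     else u (s + (i - nx) div m) $ ((i - nx) mod m))"

definition packed_state :: "real vec \<Rightarrow> real vec" where
  "packed_state z = vec nx (\<lambda>i. z $ i)"

definition packed_input :: "real vec \<Rightarrow> nat \<Rightarrow> real vec" where
  "packed_input z k = vec m (\<lambda>i. z $ (nx + k*m + i))"

primrec response :: "real vec \<Rightarrow> nat \<Rightarrow> real vec" where
  "response z 0 = packed_state z"
| "response z (Suc k) = A *\<^sub>v response z k + B *\<^sub>v packed_input z k"

definition window :: "real vec \<Rightarrow> real vec" where
  "window z = stack_yu p m l (\<lambda>k. C *\<^sub>v response z k) (packed_input z) 0"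

definition window_mat :: "real mat" where
  "window_mat = mat (p*l + m*l) (nx + m*l) (\<lambda>(i,j). window (unit_vec (nx + m*l) j) $ i)"

definition final_state_mat :: "real mat" where
  "final_state_mat = mat nx (nx + m*l) (\<lambda>(i,j). response (unit_vec (nx + m*l) j) l $ i)"

lemma response_carrier [simp]: "response z k \<in> carrier_vec nx"
  by (induction k) (use A_carrier B_carrier in \<open>auto simp: packed_state_def packed_input_def\<close>)

lemma packed_input_carrier [simp]: "packed_input z k \<in> carrier_vec m"
  and dim_packed_input [simp]: "dim_vec (packed_input z k) = m"
  by (simp_all add: packed_input_def)

lemma window_carrier: "window z \<in> carrier_vec (p*l + m*l)"
  by (simp add: window_def stack_yu_def)

lemma packed_input_add:
  assumes "x \<in> carrier_vec (nx + m*l)" "y \<in> carrier_vec (nx + m*l)" "k < l"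
  shows "packed_input (x + y) k = packed_input x k + packed_input y k"
  using assms block_index_less[of _ m k l] by (intro eq_vecI) (auto simp: packed_input_def)

lemma packed_input_smult:
  assumes "x \<in> carrier_vec (nx + m*l)" "k < l"
  shows "packed_input (c \<cdot>\<^sub>v x) k = c \<cdot>\<^sub>v packed_input x k"
  using assms block_index_less[of _ m k l] by (intro eq_vecI) (auto simp: packed_input_def)

lemma response_add:
  assumes x: "x \<in> carrier_vec (nx + m*l)" and y: "y \<in> carrier_vec (nx + m*l)"
  shows "k \<le> l \<Longrightarrow> response (x + y) k = response x k + response y k"
proof (induction k)
  case 0
  show ?case using x y by (intro eq_vecI) (auto simp: packed_state_def)
next
  case (Suc k)
  then have k: "k < l" by simp
  show ?case
    using Suc A_carrier B_carrier
    by (simp add: packed_input_add[OF x y k] mult_add_distrib_mat_vec[of _ nx nx]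
        mult_add_distrib_mat_vec[of _ nx m]) (intro eq_vecI, simp_all)
qed

lemma response_smult:
  assumes x: "x \<in> carrier_vec (nx + m*l)"
  shows "k \<le> l \<Longrightarrow> response (c \<cdot>\<^sub>v x) k = c \<cdot>\<^sub>v response x k"
proof (induction k)
  case 0
  show ?case using x by (intro eq_vecI) (auto simp: packed_state_def)
next
  case (Suc k)
  then have k: "k < l" by simp
  show ?case
    using Suc A_carrier B_carrier
    by (simp add: packed_input_smult[OF x k] mult_mat_vec[of _ nx nx] mult_mat_vec[of _ nx m]
        smult_add_distrib_vec[of _ nx])
qed

lemma stack_index:
  assumes "i < p*l + m*l"
  shows "i < p*l \<Longrightarrow> i div p < l \<and> i mod p < p"
    and "\<not> i < p*l \<Longrightarrow> (i - p*l) div m < l \<and> (i - p*l) mod m < m"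
proof -
  show "i div p < l \<and> i mod p < p" if "i < p*l"
    using that by (cases "p = 0") (auto simp: less_mult_imp_div_less mult.commute)
  show "(i - p*l) div m < l \<and> (i - p*l) mod m < m" if "\<not> i < p*l"
    using assms that by (cases "m = 0") (auto simp: less_mult_imp_div_less mult.commute)
qed

lemma window_add:
  assumes x: "x \<in> carrier_vec (nx + m*l)" and y: "y \<in> carrier_vec (nx + m*l)"
  shows "window (x + y) = window x + window y"
proof (rule eq_vecI)
  fix i assume "i < dim_vec (window x + window y)"
  then have i: "i < p*l + m*l" by (simp add: window_def stack_yu_def)
  show "window (x + y) $ i = (window x + window y) $ i"
  proof (cases "i < p*l")
    case True
    then show ?thesis
      using i stack_index(1)[OF i] response_add[OF x y, of "i div p"] C_carrier
      by (simp add: window_def stack_yu_def mult_add_distrib_mat_vec[of _ p nx])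
  next
    case False
    then show ?thesis
      using i stack_index(2)[OF i] packed_input_add[OF x y, of "(i - p*l) div m"]
      by (simp add: window_def stack_yu_def)
  qed
qed (simp add: window_def stack_yu_def)

lemma window_smult:
  assumes x: "x \<in> carrier_vec (nx + m*l)"
  shows "window (c \<cdot>\<^sub>v x) = c \<cdot>\<^sub>v window x"
proof (rule eq_vecI)
  fix i assume "i < dim_vec (c \<cdot>\<^sub>v window x)"
  then have i: "i < p*l + m*l" by (simp add: window_def stack_yu_def)
  show "window (c \<cdot>\<^sub>v x) $ i = (c \<cdot>\<^sub>v window x) $ i"
  proof (cases "i < p*l")
    case True
    then show ?thesis
      using i stack_index(1)[OF i] response_smult[OF x, of "i div p" c] C_carrier
      by (simp add: window_def stack_yu_def mult_mat_vec[of _ p nx])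
  next
    case False
    then show ?thesis
      using i stack_index(2)[OF i] packed_input_smult[OF x, of "(i - p*l) div m" c]
      by (simp add: window_def stack_yu_def)
  qed
qed (simp add: window_def stack_yu_def)

lemma window_mat_carrier: "window_mat \<in> carrier_mat (p*l + m*l) (nx + m*l)"
  by (simp add: window_mat_def)

lemma final_state_mat_carrier: "final_state_mat \<in> carrier_mat nx (nx + m*l)"
  by (simp add: final_state_mat_def)

lemma window_mat_mult: "z \<in> carrier_vec (nx + m*l) \<Longrightarrow> window_mat *\<^sub>v z = window z"
  unfolding window_mat_def
  by (rule mat_of_linear_map_mult) (auto simp: window_carrier window_add window_smult)

lemma final_state_mat_mult: "z \<in> carrier_vec (nx + m*l) \<Longrightarrow> final_state_mat *\<^sub>v z = response z l"
  unfolding final_state_mat_def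
  by (rule mat_of_linear_map_mult) (auto simp: response_add response_smult)

lemma initial_data_carrier: "initial_data x u s \<in> carrier_vec (nx + m*l)"
  by (simp add: initial_data_def)

lemma response_initial_data:
  assumes traj: "trajectory_on x u s"
  shows "k < l \<Longrightarrow> packed_input (initial_data x u s) k = u (s + k)"
    and "k \<le> l \<Longrightarrow> response (initial_data x u s) k = x (s + k)"
proof -
  show input: "packed_input (initial_data x u s) k = u (s + k)" if k: "k < l" for k
  proof -
    have u: "u (s + k) \<in> carrier_vec m"
      using traj k unfolding trajectory_on_def by auto
    have "packed_input (initial_data x u s) k $ i = u (s + k) $ i" if i: "i < m" for i
    proof -
      have "(k*m + i) div m = k" "(k*m + i) mod m = i" using i by auto
      then show ?thesis
        using i block_index_less[OF i k] by (simp add: packed_input_def initial_data_def)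
    qed
    then show ?thesis using u by (intro eq_vecI) auto
  qed
  show "response (initial_data x u s) k = x (s + k)" if "k \<le> l"
    using that
  proof (induction k)
    case 0
    show ?case
      using traj by (intro eq_vecI) (auto simp: trajectory_on_def packed_state_def initial_data_def)
  next
    case (Suc k)
    then show ?case
      using traj input[of k] by (simp add: trajectory_on_def)
  qed
qed

lemma window_mat_mult_initial_data:
  assumes traj: "trajectory_on x u s"
  shows "window_mat *\<^sub>v initial_data x u s = stack_yu p m l (\<lambda>k. C *\<^sub>v x k) u s"
proof (rule eq_vecI)
  fix i assume "i < dim_vec (stack_yu p m l (\<lambda>k. C *\<^sub>v x k) u s)"
  then have i: "i < p*l + m*l" by (simp add: stack_yu_def)
  show "(window_mat *\<^sub>v initial_data x u s) $ i = stack_yu p m l (\<lambda>k. C *\<^sub>v x k) u s $ i"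
    using i stack_index[OF i] response_initial_data[OF traj]
    by (auto simp: window_mat_mult[OF initial_data_carrier] window_def stack_yu_def)
qed (simp add: window_mat_def stack_yu_def)

lemma final_state_mat_mult_initial_data:
  "trajectory_on x u s \<Longrightarrow> final_state_mat *\<^sub>v initial_data x u s = x (s + l)"
  by (simp add: final_state_mat_mult[OF initial_data_carrier] response_initial_data)

lemma state_from_window:
  assumes Wi: "Wi \<in> carrier_mat (nx + m*l) (p*l + m*l)" "Wi * window_mat = 1\<^sub>m (nx + m*l)"
    and traj: "trajectory_on x u s"
  shows "x (s + l) = (final_state_mat * Wi) *\<^sub>v stack_yu p m l (\<lambda>k. C *\<^sub>v x k) u s"
proof -
  have "Wi *\<^sub>v (window_mat *\<^sub>v initial_data x u s) = initial_data x u s"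
    using Wi window_mat_carrier initial_data_carrier
    by (simp flip: assoc_mult_mat_vec[of Wi _ "p*l + m*l" window_mat _])
  then show ?thesis
    using Wi final_state_mat_carrier window_mat_carrier initial_data_carrier
    by (simp add: window_mat_mult_initial_data[OF traj, symmetric]
        final_state_mat_mult_initial_data[OF traj, symmetric] stack_yu_carrier)
qed

lemma window_orthogonal:
  assumes w: "w \<in> carrier_vec (p*l + m*l)" and Wt: "window_mat\<^sup>T *\<^sub>v w = 0\<^sub>v (nx + m*l)"
    and traj: "trajectory_on x u s"
  shows "w \<bullet> stack_yu p m l (\<lambda>k. C *\<^sub>v x k) u s = 0"
proof -
  have "w \<bullet> stack_yu p m l (\<lambda>k. C *\<^sub>v x k) u s = (window_mat\<^sup>T *\<^sub>v w) \<bullet> initial_data x u s"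
    using transpose_vec_mult_scalar[OF window_mat_carrier initial_data_carrier w]
    by (simp add: window_mat_mult_initial_data[OF traj])
  then show ?thesis
    using Wt initial_data_carrier by simp
qed

end

section \<open>The shift register\<close>

lemma F_mat_carrier: "F_mat p m l \<in> carrier_mat (p*l + m*l) (p*l + m*l)"
  and L_mat_carrier: "L_mat p m l \<in> carrier_mat (p*l + m*l) p"
  and B_mat_carrier: "B_mat p m l \<in> carrier_mat (p*l + m*l) m"
  by (auto simp: F_mat_def shift_mat_def L_mat_def B_mat_def)

lemma dim_row_F_L_B_mat [simp]: "dim_row (F_mat p m l) = p*l + m*l"
  "dim_row (L_mat p m l) = p*l + m*l" "dim_row (B_mat p m l) = p*l + m*l"
  by (auto simp: F_mat_def shift_mat_def L_mat_def B_mat_def)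

lemma F_mat_mult_index:
  assumes v: "v \<in> carrier_vec (p*l + m*l)" and i: "i < p*l + m*l"
  shows "(F_mat p m l *\<^sub>v v) $ i =
    (if i < p*l then (if i + p < p*l then v $ (i + p) else 0)
     else if i + m < p*l + m*l then v $ (i + m) else 0)"
proof (cases "i < p*l")
  case True
  have "(F_mat p m l *\<^sub>v v) $ i = (if i + p < p*l + m*l \<and> i + p < p*l then v $ (i + p) else 0)"
    by (rule mult_mat_vec_index_delta[OF _ v i])
      (use True in \<open>auto simp: F_mat_def shift_mat_def\<close>)
  then show ?thesis using True by auto
next
  case False
  have "(F_mat p m l *\<^sub>v v) $ i = (if i + m < p*l + m*l \<and> True then v $ (i + m) else 0)"
    by (rule mult_mat_vec_index_delta[OF _ v i])
      (use False i in \<open>auto simp: F_mat_def shift_mat_def\<close>)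
  then show ?thesis using False by auto
qed

lemma L_mat_mult_index:
  assumes y: "y \<in> carrier_vec p" and i: "i < p*l + m*l"
  shows "(L_mat p m l *\<^sub>v y) $ i =
    (if p*l - p \<le> i \<and> i < p*l then y $ (i - (p*l - p)) else 0)"
proof -
  have "(L_mat p m l *\<^sub>v y) $ i = (if i - (p*l - p) < p \<and> p*l - p \<le> i then y $ (i - (p*l - p)) else 0)"
    by (rule mult_mat_vec_index_delta[OF _ y i]) (use i in \<open>auto simp: L_mat_def\<close>)
  moreover have "i - (p*l - p) < p \<and> p*l - p \<le> i \<longleftrightarrow> p*l - p \<le> i \<and> i < p*l"
    using i by (cases l) auto
  ultimately show ?thesis by simp
qed

lemma B_mat_mult_index:
  assumes u: "u \<in> carrier_vec m" and i: "i < p*l + m*l"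
  shows "(B_mat p m l *\<^sub>v u) $ i = (if p*l + m*l - m \<le> i then u $ (i - (p*l + m*l - m)) else 0)"
proof -
  have "(B_mat p m l *\<^sub>v u) $ i =
      (if i - (p*l + m*l - m) < m \<and> p*l + m*l - m \<le> i then u $ (i - (p*l + m*l - m)) else 0)"
    by (rule mult_mat_vec_index_delta[OF _ u i]) (use i in \<open>auto simp: B_mat_def\<close>)
  then show ?thesis using i by auto
qed

lemma div_mod_last_block:
  fixes q L j :: nat
  assumes j: "j < q*L" and last: "\<not> j + q < q*L"
  shows "j div q = L - 1" and "j mod q = j - (q*L - q)"
proof -
  obtain L' where L': "L = Suc L'" using j by (cases L) auto
  then have qL: "q*L = L'*q + q" by simp
  then have r: "j - L'*q < q" and j_eq: "j = L'*q + (j - L'*q)" using j last by linarith+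
  have "(L'*q + (j - L'*q)) div q = L'" "(L'*q + (j - L'*q)) mod q = j - L'*q"
    using r by simp_all
  then show "j div q = L - 1" "j mod q = j - (q*L - q)"
    using j_eq L' qL by (simp_all add: mult.commute)
qed

lemma shift_register_step_index:
  assumes chi: "chi \<in> carrier_vec (p*l + m*l)" and y: "y \<in> carrier_vec p" and u: "u \<in> carrier_vec m"
    and i: "i < p*l + m*l"
  shows "(F_mat p m l *\<^sub>v chi + L_mat p m l *\<^sub>v y + B_mat p m l *\<^sub>v u) $ i =
    (if i < p*l then (if i + p < p*l then chi $ (i + p) else y $ (i - (p*l - p)))
     else if i + m < p*l + m*l then chi $ (i + m) else u $ (i - (p*l + m*l - m)))"
proof -
  have sum: "(F_mat p m l *\<^sub>v chi + L_mat p m l *\<^sub>v y + B_mat p m l *\<^sub>v u) $ i =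
      (F_mat p m l *\<^sub>v chi) $ i + (L_mat p m l *\<^sub>v y) $ i + (B_mat p m l *\<^sub>v u) $ i"
    using i by simp
  note F = F_mat_mult_index[OF chi i] and L = L_mat_mult_index[OF y i]
    and B = B_mat_mult_index[OF u i]
  show ?thesis
  proof (cases "i < p*l")
    case True
    then have "0 < l" by (cases l) auto
    then have "p \<le> p*l" "\<not> p*l + m*l - m \<le> i" using True by (cases l; auto)+
    then show ?thesis using sum F L B True by auto
  next
    case False
    have "p*l + m*l - m \<le> i \<longleftrightarrow> \<not> i + m < p*l + m*l" using i by linarith
    then show ?thesis using sum F L B False by auto
  qed
qed

text \<open>In the register \<open>\<chi>\<close>, the output block with index \<open>b\<close> holds the output of \<open>l - b\<close> steps
  ago, and likewise for the inputs, as soon as that time is nonnegative.\<close>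

lemma shift_register_outputs:
  fixes chi y u :: "nat \<Rightarrow> real vec"
  assumes chi: "\<And>k. chi k \<in> carrier_vec (p*l + m*l)"
    and y: "\<And>k. y k \<in> carrier_vec p" and u: "\<And>k. u k \<in> carrier_vec m"
    and step: "\<And>k. chi (Suc k) = F_mat p m l *\<^sub>v chi k + L_mat p m l *\<^sub>v y k + B_mat p m l *\<^sub>v u k"
  shows "\<forall>i < p*l. l \<le> i div p + k \<longrightarrow> chi k $ i = y (k + i div p - l) $ (i mod p)"
proof (induction k)
  case 0
  have "i div p < l" if "i < p*l" for i
    using that by (intro less_mult_imp_div_less) (simp add: mult.commute)
  then show ?case by (simp add: not_le[symmetric])
next
  case (Suc k)
  show ?case
  proof (intro allI impI)
    fix i assume ipl: "i < p*l" and cond: "l \<le> i div p + Suc k"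
    have step_i: "chi (Suc k) $ i = (if i + p < p*l then chi k $ (i + p) else y k $ (i - (p*l - p)))"
      using shift_register_step_index[OF chi y u, of i] step[of k] ipl by simp
    show "chi (Suc k) $ i = y (Suc k + i div p - l) $ (i mod p)"
    proof (cases "i + p < p*l")
      case True
      have "0 < p" using ipl by (cases p) auto
      then have "(i + p) div p = Suc (i div p)" "(i + p) mod p = i mod p"
        by simp_all
      then have "chi k $ (i + p) = y (Suc k + i div p - l) $ (i mod p)"
        using Suc.IH True cond by simp
      then show ?thesis using step_i True by simp
    next
      case False
      note last = div_mod_last_block[OF ipl False]
      have "Suc k + i div p - l = k" using last(1) ipl by (cases l) auto
      then show ?thesis using step_i False last(2) by simp
    qed
  qed
qed

lemma shift_register_inputs:
  fixes chi y u :: "nat \<Rightarrow> real vec"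
  assumes chi: "\<And>k. chi k \<in> carrier_vec (p*l + m*l)"
    and y: "\<And>k. y k \<in> carrier_vec p" and u: "\<And>k. u k \<in> carrier_vec m"
    and step: "\<And>k. chi (Suc k) = F_mat p m l *\<^sub>v chi k + L_mat p m l *\<^sub>v y k + B_mat p m l *\<^sub>v u k"
  shows "\<forall>i < m*l. l \<le> i div m + k \<longrightarrow> chi k $ (p*l + i) = u (k + i div m - l) $ (i mod m)"
proof (induction k)
  case 0
  have "i div m < l" if "i < m*l" for i
    using that by (intro less_mult_imp_div_less) (simp add: mult.commute)
  then show ?case by (simp add: not_le[symmetric])
next
  case (Suc k)
  show ?case
  proof (intro allI impI)
    fix i assume i: "i < m*l" and cond: "l \<le> i div m + Suc k"
    have step_i: "chi (Suc k) $ (p*l + i) =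
        (if i + m < m*l then chi k $ (p*l + (i + m)) else u k $ (i - (m*l - m)))"
    proof -
      have "m \<le> m*l" using i by (cases l) auto
      then have "p*l + i - (p*l + m*l - m) = i - (m*l - m)" by linarith
      then show ?thesis
        using shift_register_step_index[OF chi y u, of "p*l + i"] step[of k] i by (simp add: add.assoc)
    qed
    show "chi (Suc k) $ (p*l + i) = u (Suc k + i div m - l) $ (i mod m)"
    proof (cases "i + m < m*l")
      case True
      have "0 < m" using i by (cases m) auto
      then have "(i + m) div m = Suc (i div m)" "(i + m) mod m = i mod m"
        by simp_all
      then have "chi k $ (p*l + (i + m)) = u (Suc k + i div m - l) $ (i mod m)"
        using Suc.IH True cond by simp
      then show ?thesis using step_i True by simp
    next
      case False
      note last = div_mod_last_block[OF i False]
      have "Suc k + i div m - l = k" using last(1) i by (cases l) auto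
      then show ?thesis using step_i False last(2) by simp
    qed
  qed
qed

lemma shift_register_window:
  fixes chi y u :: "nat \<Rightarrow> real vec"
  assumes chi: "\<And>k. chi k \<in> carrier_vec (p*l + m*l)"
    and y: "\<And>k. y k \<in> carrier_vec p" and u: "\<And>k. u k \<in> carrier_vec m"
    and step: "\<And>k. chi (Suc k) = F_mat p m l *\<^sub>v chi k + L_mat p m l *\<^sub>v y k + B_mat p m l *\<^sub>v u k"
    and k: "l \<le> k"
  shows "chi k = stack_yu p m l y u (k - l)"
proof (rule eq_vecI)
  fix i assume "i < dim_vec (stack_yu p m l y u (k - l))"
  then have i: "i < p*l + m*l" by (simp add: stack_yu_def)
  have "k + j - l = k - l + j" for j using k by simp
  moreover have "i - p*l < m*l" if "\<not> i < p*l" using i that by linarith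
  ultimately show "chi k $ i = stack_yu p m l y u (k - l) $ i"
    using shift_register_outputs[where chi = chi and y = y and u = u, OF chi y u step, of k]
      shift_register_inputs[where chi = chi and y = y and u = u, OF chi y u step, of k] i k
    by (cases "i < p*l") (auto simp: stack_yu_def dest: spec[of _ "i - p*l"])
qed (use chi in \<open>simp add: stack_yu_def\<close>)

section \<open>The closed loop\<close>

lemma two_phase_exponential_bound:
  fixes E :: "nat \<Rightarrow> real"
  assumes q: "0 < q" "q \<le> 1" and A: "0 \<le> A" and B: "0 \<le> B" and E0: "0 \<le> E 0"
    and early: "\<And>k. k \<le> l \<Longrightarrow> E k \<le> A * E 0"
    and late: "\<And>j. E (l + j) \<le> B * q ^ j * E 0"
  shows "E k \<le> (A + B) / q ^ l * q ^ k * E 0"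
proof (cases "k \<le> l")
  case True
  have "A * q ^ l \<le> (A + B) * q ^ k"
    using True q A B power_decreasing[of k l q] by (smt (verit) mult_left_mono mult_right_mono zero_le_power)
  then have "A \<le> (A + B) / q ^ l * q ^ k"
    using q by (simp add: pos_le_divide_eq)
  then show ?thesis
    using early[OF True] E0 by (smt (verit) mult_right_mono)
next
  case False
  then obtain j where k: "k = l + j" by (metis le_add_diff_inverse nle_le)
  have "B * q ^ j * q ^ l \<le> (A + B) * q ^ k"
    using A q by (simp add: k power_add distrib_right)
  then have "B * q ^ j \<le> (A + B) / q ^ l * q ^ k"
    using q by (simp add: pos_le_divide_eq)
  then show ?thesis
    using late[of j] E0 k by (smt (verit) mult_right_mono)
qed

context lti_window
begin

definition closed_loop :: "real mat \<Rightarrow> (nat \<Rightarrow> real vec) \<Rightarrow> (nat \<Rightarrow> real vec) \<Rightarrow> bool" where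
  "closed_loop K z chi \<longleftrightarrow> (\<forall>k. z k \<in> carrier_vec nx \<and> chi k \<in> carrier_vec (p*l + m*l) \<and>
     z (Suc k) = A *\<^sub>v z k + B *\<^sub>v (K *\<^sub>v chi k) \<and>
     chi (Suc k) = F_mat p m l *\<^sub>v chi k + L_mat p m l *\<^sub>v (C *\<^sub>v z k) + B_mat p m l *\<^sub>v (K *\<^sub>v chi k))"

definition energy :: "(nat \<Rightarrow> real vec) \<Rightarrow> (nat \<Rightarrow> real vec) \<Rightarrow> nat \<Rightarrow> real" where
  "energy z chi k = z k \<bullet> z k + chi k \<bullet> chi k"

lemma energy_nonneg: "0 \<le> energy z chi k"
  by (simp add: energy_def scalar_prod_self_nonneg add_nonneg_nonneg)

context
  fixes K Wi :: "real mat"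
  assumes K: "K \<in> carrier_mat m (p*l + m*l)"
    and Wi: "Wi \<in> carrier_mat (nx + m*l) (p*l + m*l)" "Wi * window_mat = 1\<^sub>m (nx + m*l)"
begin

definition closed_loop_mat :: "real mat" where
  "closed_loop_mat = F_mat p m l + B_mat p m l * K + L_mat p m l * (C * (final_state_mat * Wi))"

lemma closed_loop_mat_carrier: "closed_loop_mat \<in> carrier_mat (p*l + m*l) (p*l + m*l)"
  using K Wi(1) C_carrier final_state_mat_carrier F_mat_carrier[of p m l] B_mat_carrier[of p m l]
    L_mat_carrier[of p m l]
  by (simp add: closed_loop_mat_def)

lemma closed_loop_register:
  assumes cl: "closed_loop K z chi" and k: "l \<le> k"
  shows "chi k = stack_yu p m l (\<lambda>k. C *\<^sub>v z k) (\<lambda>k. K *\<^sub>v chi k) (k - l)"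
  using cl C_carrier K
  by (intro shift_register_window[OF _ _ _ _ k]) (auto simp: closed_loop_def)

lemma closed_loop_state:
  assumes cl: "closed_loop K z chi" and k: "l \<le> k"
  shows "z k = (final_state_mat * Wi) *\<^sub>v chi k"
proof -
  have "trajectory_on z (\<lambda>k. K *\<^sub>v chi k) (k - l)"
    using cl K by (auto simp: trajectory_on_def closed_loop_def)
  from state_from_window[OF Wi this] show ?thesis
    using k by (simp add: closed_loop_register[OF cl k])
qed

lemma closed_loop_register_step:
  assumes cl: "closed_loop K z chi" and k: "l \<le> k"
  shows "chi (Suc k) = closed_loop_mat *\<^sub>v chi k"
proof -
  have chi: "chi k \<in> carrier_vec (p*l + m*l)" using cl by (simp add: closed_loop_def)
  have H: "final_state_mat * Wi \<in> carrier_mat nx (p*l + m*l)"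
    using final_state_mat_carrier Wi(1) by simp
  have CH: "C * (final_state_mat * Wi) \<in> carrier_mat p (p*l + m*l)"
    using H C_carrier by simp
  have "chi (Suc k) = F_mat p m l *\<^sub>v chi k + L_mat p m l *\<^sub>v (C *\<^sub>v ((final_state_mat * Wi) *\<^sub>v chi k))
      + B_mat p m l *\<^sub>v (K *\<^sub>v chi k)"
    using cl closed_loop_state[OF cl k] by (simp add: closed_loop_def)
  also have "L_mat p m l *\<^sub>v (C *\<^sub>v ((final_state_mat * Wi) *\<^sub>v chi k)) =
      (L_mat p m l * (C * (final_state_mat * Wi))) *\<^sub>v chi k"
    by (simp add: assoc_mult_mat_vec[OF L_mat_carrier CH chi] assoc_mult_mat_vec[OF C_carrier H chi])
  also have "F_mat p m l *\<^sub>v chi k + (L_mat p m l * (C * (final_state_mat * Wi))) *\<^sub>v chi k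
      + B_mat p m l *\<^sub>v (K *\<^sub>v chi k) = closed_loop_mat *\<^sub>v chi k"
    using chi K CH F_mat_carrier[of p m l] B_mat_carrier[of p m l] L_mat_carrier[of p m l]
    by (simp add: closed_loop_mat_def add_mult_distrib_mat_vec[of _ "p*l + m*l" "p*l + m*l"])
      (intro eq_vecI, simp_all)
  finally show ?thesis .
qed

lemma closed_loop_register_powers:
  assumes cl: "closed_loop K z chi" and k: "l \<le> k"
  shows "chi (k + j) = (closed_loop_mat ^\<^sub>m j) *\<^sub>v chi k"
  using k
proof (induction j arbitrary: k)
  case 0
  then show ?case using cl closed_loop_mat_carrier by (simp add: closed_loop_def)
next
  case (Suc j)
  have "l \<le> Suc k" using Suc.prems by simp
  from Suc.IH[OF this] have "chi (k + Suc j) = (closed_loop_mat ^\<^sub>m j) *\<^sub>v chi (Suc k)"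
    by simp
  also have "\<dots> = (closed_loop_mat ^\<^sub>m j * closed_loop_mat) *\<^sub>v chi k"
    using cl closed_loop_mat_carrier closed_loop_register_step[OF cl Suc.prems]
    by (simp add: closed_loop_def assoc_mult_mat_vec[of _ "p*l + m*l" "p*l + m*l"] pow_carrier_mat)
  finally show ?case by simp
qed

definition energy_gain :: real where
  "energy_gain = 2 * (mat_sq_bound A + mat_sq_bound (B * K) +
     mat_sq_bound (F_mat p m l + B_mat p m l * K) + mat_sq_bound (L_mat p m l * C))"

lemma energy_gain_nonneg: "0 \<le> energy_gain"
  by (simp add: energy_gain_def mat_sq_bound_nonneg)

lemma closed_loop_energy_step:
  assumes cl: "closed_loop K z chi"
  shows "energy z chi (Suc k) \<le> energy_gain * energy z chi k"
proof -
  have z: "z k \<in> carrier_vec nx" and chi: "chi k \<in> carrier_vec (p*l + m*l)"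
    using cl by (auto simp: closed_loop_def)
  have BK: "B * K \<in> carrier_mat nx (p*l + m*l)"
    and FBK: "F_mat p m l + B_mat p m l * K \<in> carrier_mat (p*l + m*l) (p*l + m*l)"
    and LC: "L_mat p m l * C \<in> carrier_mat (p*l + m*l) nx"
    using B_carrier K C_carrier F_mat_carrier[of p m l] B_mat_carrier[of p m l] L_mat_carrier[of p m l]
    by auto
  have z_step: "z (Suc k) = A *\<^sub>v z k + (B * K) *\<^sub>v chi k"
    using cl B_carrier K chi by (simp add: closed_loop_def)
  have chi_step: "chi (Suc k) = (F_mat p m l + B_mat p m l * K) *\<^sub>v chi k + (L_mat p m l * C) *\<^sub>v z k"
    using cl z chi K C_carrier F_mat_carrier[of p m l] B_mat_carrier[of p m l] L_mat_carrier[of p m l]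
    by (simp add: closed_loop_def add_mult_distrib_mat_vec[of _ "p*l + m*l" "p*l + m*l"])
      (intro eq_vecI, simp_all)
  define Z X where "Z = z k \<bullet> z k" and "X = chi k \<bullet> chi k"
  have "z (Suc k) \<bullet> z (Suc k) \<le> 2 * (mat_sq_bound A * Z) + 2 * (mat_sq_bound (B * K) * X)"
    using scalar_prod_add_self_le[of "A *\<^sub>v z k" nx "(B * K) *\<^sub>v chi k"] A_carrier BK z chi
      mult_mat_vec_sq_le[OF A_carrier z] mult_mat_vec_sq_le[OF BK chi]
    unfolding z_step Z_def X_def by simp
  moreover have "chi (Suc k) \<bullet> chi (Suc k) \<le>
      2 * (mat_sq_bound (F_mat p m l + B_mat p m l * K) * X) + 2 * (mat_sq_bound (L_mat p m l * C) * Z)"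
    using scalar_prod_add_self_le[of "(F_mat p m l + B_mat p m l * K) *\<^sub>v chi k" "p*l + m*l"
        "(L_mat p m l * C) *\<^sub>v z k"] FBK LC z chi
      mult_mat_vec_sq_le[OF FBK chi] mult_mat_vec_sq_le[OF LC z]
    unfolding chi_step Z_def X_def by simp
  moreover have "0 \<le> mat_sq_bound A * X" "0 \<le> mat_sq_bound (B * K) * Z"
    "0 \<le> mat_sq_bound (F_mat p m l + B_mat p m l * K) * Z" "0 \<le> mat_sq_bound (L_mat p m l * C) * X"
    by (simp_all add: Z_def X_def scalar_prod_self_nonneg mat_sq_bound_nonneg)
  moreover have "energy_gain * (Z + X) = 2 * (mat_sq_bound A * Z) + 2 * (mat_sq_bound (B * K) * X)
      + 2 * (mat_sq_bound (F_mat p m l + B_mat p m l * K) * X) + 2 * (mat_sq_bound (L_mat p m l * C) * Z)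
      + 2 * (mat_sq_bound A * X + mat_sq_bound (B * K) * Z
        + mat_sq_bound (F_mat p m l + B_mat p m l * K) * Z + mat_sq_bound (L_mat p m l * C) * X)"
    by (simp add: energy_gain_def algebra_simps)
  ultimately show ?thesis
    unfolding energy_def Z_def[symmetric] X_def[symmetric] by (smt (verit))
qed

lemma closed_loop_energy_early:
  assumes cl: "closed_loop K z chi" and k: "k \<le> l"
  shows "energy z chi k \<le> (energy_gain + 1) ^ l * energy z chi 0"
proof -
  have "energy z chi k \<le> (energy_gain + 1) ^ k * energy z chi 0" for k
  proof (induction k)
    case (Suc k)
    have "energy z chi (Suc k) \<le> (energy_gain + 1) * energy z chi k"
      using closed_loop_energy_step[OF cl, of k] energy_nonneg[of z chi k]
      by (simp add: distrib_right)
    also have "\<dots> \<le> (energy_gain + 1) * ((energy_gain + 1) ^ k * energy z chi 0)"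
      using Suc energy_gain_nonneg by (intro mult_left_mono) auto
    finally show ?case by (simp add: mult.assoc)
  qed simp
  also have "(energy_gain + 1) ^ k * energy z chi 0 \<le> (energy_gain + 1) ^ l * energy z chi 0"
    using k energy_gain_nonneg energy_nonneg[of z chi 0] by (intro mult_right_mono power_increasing) auto
  finally show ?thesis .
qed

lemma closed_loop_energy_late:
  assumes cl: "closed_loop K z chi"
  shows "energy z chi (l + j) \<le> (1 + mat_sq_bound (final_state_mat * Wi)) *
    (mat_sq_bound (closed_loop_mat ^\<^sub>m j) * ((energy_gain + 1) ^ l * energy z chi 0))"
proof -
  define H where "H = final_state_mat * Wi"
  have chi: "chi k \<in> carrier_vec (p*l + m*l)" for k using cl by (simp add: closed_loop_def)
  have Phi_j: "closed_loop_mat ^\<^sub>m j \<in> carrier_mat (p*l + m*l) (p*l + m*l)"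
    using closed_loop_mat_carrier by (simp add: pow_carrier_mat)
  have H: "H \<in> carrier_mat nx (p*l + m*l)" using final_state_mat_carrier Wi(1) by (simp add: H_def)
  have "z (l + j) \<bullet> z (l + j) \<le> mat_sq_bound H * (chi (l + j) \<bullet> chi (l + j))"
    using closed_loop_state[OF cl, of "l + j"] mult_mat_vec_sq_le[OF H chi] by (simp add: H_def)
  then have "energy z chi (l + j) \<le> (1 + mat_sq_bound H) * (chi (l + j) \<bullet> chi (l + j))"
    by (simp add: energy_def algebra_simps)
  also have "chi (l + j) \<bullet> chi (l + j) \<le> mat_sq_bound (closed_loop_mat ^\<^sub>m j) * (chi l \<bullet> chi l)"
    using closed_loop_register_powers[OF cl, of l j] mult_mat_vec_sq_le[OF Phi_j chi] by simp
  also have "chi l \<bullet> chi l \<le> (energy_gain + 1) ^ l * energy z chi 0"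
    using closed_loop_energy_early[OF cl, of l] scalar_prod_self_nonneg[of "z l"]
    by (simp add: energy_def)
  finally show ?thesis
    using mat_sq_bound_nonneg[of H] mat_sq_bound_nonneg[of "closed_loop_mat ^\<^sub>m j"]
    by (simp add: H_def mult_left_mono)
qed

lemma closed_loop_exponential_bound:
  assumes decay: "\<And>k i j. i < p*l + m*l \<Longrightarrow> j < p*l + m*l \<Longrightarrow>
      \<bar>(closed_loop_mat ^\<^sub>m k) $$ (i,j)\<bar> \<le> c / g ^ k"
    and g: "1 < g"
  shows "\<exists>\<beta> q. 0 \<le> \<beta> \<and> 0 < q \<and> q < 1 \<and>
    (\<forall>z chi k. closed_loop K z chi \<longrightarrow> energy z chi k \<le> \<beta> * q ^ k * energy z chi 0)"
proof -
  define N where "N = p*l + m*l"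
  define q where "q = 1 / g^2"
  define early where "early = (energy_gain + 1) ^ l"
  define late where "late = (1 + mat_sq_bound (final_state_mat * Wi)) * (real N * (real N * c)^2) * early"
  have q: "0 < q" "q < 1" using g by (auto simp: q_def)
  have early: "0 \<le> early" using energy_gain_nonneg by (simp add: early_def)
  have late: "0 \<le> late" using early mat_sq_bound_nonneg[of "final_state_mat * Wi"] by (simp add: late_def)
  have bound_late: "energy z chi (l + j) \<le> late * q ^ j * energy z chi 0"
    if cl: "closed_loop K z chi" for z chi j
  proof -
    have "mat_sq_bound (closed_loop_mat ^\<^sub>m j) \<le> real N * (real N * (c / g ^ j))^2"
      using decay closed_loop_mat_carrier by (intro mat_sq_bound_le) (auto simp: N_def pow_carrier_mat)
    also have "\<dots> = real N * (real N * c)^2 * q ^ j"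
      by (simp add: q_def power_divide power_mult_distrib field_simps flip: power_mult)
    finally show ?thesis
      using closed_loop_energy_late[OF cl, of j] mat_sq_bound_nonneg[of "final_state_mat * Wi"] early
        energy_nonneg[of z chi 0] energy_gain_nonneg
      by (simp add: late_def early_def) (smt (verit) mult_left_mono mult_right_mono mult.assoc
          mult.commute zero_le_power)
  qed
  define \<beta> where "\<beta> = (early + late) / q ^ l"
  show ?thesis
  proof (intro exI conjI allI impI)
    show "0 \<le> \<beta>" using early late q by (simp add: \<beta>_def)
    show "0 < q" "q < 1" using q by simp_all
    fix z chi k assume cl: "closed_loop K z chi"
    show "energy z chi k \<le> \<beta> * q ^ k * energy z chi 0"
      unfolding \<beta>_def
      by (rule two_phase_exponential_bound[where E = "energy z chi"])
        (use q early late energy_nonneg closed_loop_energy_early[OF cl] bound_late[OF cl] in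
          \<open>auto simp: early_def\<close>)
  qed
qed

end

end

lemma closed_loop_GAS_if_exponential_bound:
  assumes q: "0 < q" "q < 1" and \<beta>: "0 \<le> \<beta>"
    and bound: "\<And>x xa chi k. closed_loop_sol A B C Aa Ba Ca F L Bl K n na N x xa chi \<Longrightarrow>
      cl_norm (x k) (xa k) (chi k) ^ 2 \<le> \<beta> * q ^ k * cl_norm (x 0) (xa 0) (chi 0) ^ 2"
  shows "closed_loop_GAS A B C Aa Ba Ca F L Bl K n na N"
proof -
  have norm_nonneg: "0 \<le> cl_norm a b c" for a b c
    by (simp add: cl_norm_def scalar_prod_self_nonneg add_nonneg_nonneg)
  have stable: "cl_norm (x k) (xa k) (chi k) < \<epsilon>"
    if sol: "closed_loop_sol A B C Aa Ba Ca F L Bl K n na N x xa chi"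
      and \<epsilon>: "0 < \<epsilon>" and small: "cl_norm (x 0) (xa 0) (chi 0) < \<epsilon> / sqrt (\<beta> + 1)"
    for x xa chi k \<epsilon>
  proof -
    define r where "r = cl_norm (x 0) (xa 0) (chi 0)"
    have "r ^ 2 * (\<beta> + 1) < \<epsilon> ^ 2"
      using small norm_nonneg \<beta> \<epsilon> power_strict_mono[of r "\<epsilon> / sqrt (\<beta> + 1)" 2]
      by (simp add: r_def power_divide field_simps)
    moreover have "cl_norm (x k) (xa k) (chi k) ^ 2 \<le> \<beta> * r ^ 2 * q ^ k"
      using bound[OF sol, of k] by (simp add: r_def mult_ac)
    moreover have "\<beta> * r ^ 2 * q ^ k \<le> \<beta> * r ^ 2"
      using q \<beta> by (intro mult_left_le) (auto simp: power_le_one)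
    moreover have "\<beta> * r ^ 2 \<le> r ^ 2 * (\<beta> + 1)"
      by (simp add: algebra_simps)
    ultimately have "cl_norm (x k) (xa k) (chi k) ^ 2 < \<epsilon> ^ 2"
      by linarith
    then show ?thesis
      by (rule power_less_imp_less_base) (use \<epsilon> in linarith)
  qed
  have converge: "(\<lambda>k. cl_norm (x k) (xa k) (chi k)) \<longlonglongrightarrow> 0"
    if sol: "closed_loop_sol A B C Aa Ba Ca F L Bl K n na N x xa chi" for x xa chi
  proof -
    define r where "r = cl_norm (x 0) (xa 0) (chi 0)"
    have "(\<lambda>k. cl_norm (x k) (xa k) (chi k) ^ 2) \<longlonglongrightarrow> 0"
    proof (rule tendsto_sandwich[OF _ _ tendsto_const])
      show "\<forall>\<^sub>F k in sequentially. 0 \<le> cl_norm (x k) (xa k) (chi k) ^ 2"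
        by simp
      show "\<forall>\<^sub>F k in sequentially. cl_norm (x k) (xa k) (chi k) ^ 2 \<le> \<beta> * r ^ 2 * q ^ k"
        using bound[OF sol] by (intro always_eventually allI) (simp add: r_def mult_ac)
      have "(\<lambda>k. \<beta> * r ^ 2 * q ^ k) \<longlonglongrightarrow> \<beta> * r ^ 2 * 0"
        using q by (intro tendsto_mult_left LIMSEQ_power_zero) simp_all
      then show "(\<lambda>k. \<beta> * r ^ 2 * q ^ k) \<longlonglongrightarrow> 0"
        by simp
    qed
    then have "(\<lambda>k. sqrt (cl_norm (x k) (xa k) (chi k) ^ 2)) \<longlonglongrightarrow> sqrt 0"
      by (rule tendsto_real_sqrt)
    moreover have "sqrt (cl_norm (x k) (xa k) (chi k) ^ 2) = cl_norm (x k) (xa k) (chi k)" for k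
      using norm_nonneg by simp
    ultimately show ?thesis by simp
  qed
  show ?thesis
    unfolding closed_loop_GAS_def
  proof (intro conjI allI impI)
    fix \<epsilon> :: real assume "\<epsilon> > 0"
    then show "\<exists>\<delta>>0. \<forall>x xa chi. closed_loop_sol A B C Aa Ba Ca F L Bl K n na N x xa chi \<longrightarrow>
        cl_norm (x 0) (xa 0) (chi 0) < \<delta> \<longrightarrow> (\<forall>k. cl_norm (x k) (xa k) (chi k) < \<epsilon>)"
      using stable \<beta> by (intro exI[of _ "\<epsilon> / sqrt (\<beta> + 1)"]) auto
  qed (rule converge)
qed

section \<open>The augmented plant\<close>

definition aug_state_mat :: "real mat \<Rightarrow> real mat \<Rightarrow> real mat" where
  "aug_state_mat A Aa = four_block_mat A (0\<^sub>m (dim_row A) (dim_col Aa)) (0\<^sub>m (dim_row Aa) (dim_col A)) Aa"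

definition aug_output_mat :: "real mat \<Rightarrow> real mat \<Rightarrow> real mat" where
  "aug_output_mat C Ca = four_block_mat C Ca (0\<^sub>m 0 (dim_col C)) (0\<^sub>m 0 (dim_col Ca))"

lemma aug_carrier:
  assumes "A \<in> carrier_mat n n" "Aa \<in> carrier_mat na na" "B \<in> carrier_mat n m" "Ba \<in> carrier_mat na m"
    "C \<in> carrier_mat p n" "Ca \<in> carrier_mat p na"
  shows "aug_state_mat A Aa \<in> carrier_mat (n + na) (n + na)" "B @\<^sub>r Ba \<in> carrier_mat (n + na) m"
    "aug_output_mat C Ca \<in> carrier_mat p (n + na)"
  using assms by (auto simp: aug_state_mat_def aug_output_mat_def)

lemma aug_step:
  assumes "A \<in> carrier_mat n n" "Aa \<in> carrier_mat na na" "B \<in> carrier_mat n m" "Ba \<in> carrier_mat na m"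
    and "x \<in> carrier_vec n" "xa \<in> carrier_vec na" "u \<in> carrier_vec m"
  shows "(A *\<^sub>v x + B *\<^sub>v u) @\<^sub>v (Aa *\<^sub>v xa + Ba *\<^sub>v u) =
    aug_state_mat A Aa *\<^sub>v (x @\<^sub>v xa) + (B @\<^sub>r Ba) *\<^sub>v u"
proof -
  have "aug_state_mat A Aa *\<^sub>v (x @\<^sub>v xa) + (B @\<^sub>r Ba) *\<^sub>v u =
      (A *\<^sub>v x @\<^sub>v Aa *\<^sub>v xa) + (B *\<^sub>v u @\<^sub>v Ba *\<^sub>v u)"
    using assms by (simp add: aug_state_mat_def mult_mat_vec_split mat_mult_append)
  also have "\<dots> = (A *\<^sub>v x + B *\<^sub>v u) @\<^sub>v (Aa *\<^sub>v xa + Ba *\<^sub>v u)"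
    using assms by (intro append_vec_add[of _ n _ _ na]) auto
  finally show ?thesis by simp
qed

lemma aug_output:
  assumes "C \<in> carrier_mat p n" "Ca \<in> carrier_mat p na" "x \<in> carrier_vec n" "xa \<in> carrier_vec na"
  shows "aug_output_mat C Ca *\<^sub>v (x @\<^sub>v xa) = C *\<^sub>v x + Ca *\<^sub>v xa"
proof -
  have dims: "dim_col C = n" "dim_col Ca = na" using assms by auto
  have "aug_output_mat C Ca *\<^sub>v (x @\<^sub>v xa) =
      (C *\<^sub>v x + Ca *\<^sub>v xa) @\<^sub>v (0\<^sub>m 0 n *\<^sub>v x + 0\<^sub>m 0 na *\<^sub>v xa)"
    unfolding aug_output_mat_def dims by (rule four_block_mat_mult_vec) (use assms in auto)
  also have "\<dots> = C *\<^sub>v x + Ca *\<^sub>v xa"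
    using assms by (intro eq_vecI) auto
  finally show ?thesis .
qed

section \<open>The noisy experiment\<close>

lemma data_quadratic_form:
  fixes M1 Ps0 Th :: "real mat"
  assumes M1: "M1 \<in> carrier_mat p c" and Ps0: "Ps0 \<in> carrier_mat N c"
    and Th: "Th \<in> carrier_mat (p + N) (p + N)" and Th_sym: "Th\<^sup>T = Th"
    and s: "s \<in> carrier_vec p" and g: "g \<in> carrier_vec N"
  shows "s \<bullet> ((M1 * M1\<^sup>T - Th11 p Th) *\<^sub>v s) + 2 * (s \<bullet> ((- (M1 * Ps0\<^sup>T) + Th12 p N Th) *\<^sub>v g))
      + g \<bullet> ((Ps0 * Ps0\<^sup>T - Th22 p N Th) *\<^sub>v g) =
    (\<Sum>j<c. (col M1 j \<bullet> s - col Ps0 j \<bullet> g)^2) - (s @\<^sub>v - g) \<bullet> (Th *\<^sub>v (s @\<^sub>v - g))"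
proof -
  have Th_blocks: "Th11 p Th \<in> carrier_mat p p" "Th12 p N Th \<in> carrier_mat p N"
    "Th22 p N Th \<in> carrier_mat N N"
    by (simp_all add: Th11_def Th12_def Th22_def)
  have "s \<bullet> ((M1 * M1\<^sup>T - Th11 p Th) *\<^sub>v s) = s \<bullet> ((M1 * M1\<^sup>T) *\<^sub>v s) - s \<bullet> (Th11 p Th *\<^sub>v s)"
    by (rule scalar_prod_minus_mat_vec) (use M1 s Th_blocks in auto)
  moreover have "s \<bullet> ((- (M1 * Ps0\<^sup>T) + Th12 p N Th) *\<^sub>v g) =
      - (s \<bullet> ((M1 * Ps0\<^sup>T) *\<^sub>v g)) + s \<bullet> (Th12 p N Th *\<^sub>v g)"
    using scalar_prod_add_mat_vec[of "- (M1 * Ps0\<^sup>T)" p N] scalar_prod_uminus_mat_vec[of "M1 * Ps0\<^sup>T" p N]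
      M1 Ps0 s g Th_blocks by simp
  moreover have "g \<bullet> ((Ps0 * Ps0\<^sup>T - Th22 p N Th) *\<^sub>v g) = g \<bullet> ((Ps0 * Ps0\<^sup>T) *\<^sub>v g) - g \<bullet> (Th22 p N Th *\<^sub>v g)"
    by (rule scalar_prod_minus_mat_vec) (use Ps0 g Th_blocks in auto)
  moreover have "(s @\<^sub>v - g) \<bullet> (Th *\<^sub>v (s @\<^sub>v - g)) =
      s \<bullet> (Th11 p Th *\<^sub>v s) - 2 * (s \<bullet> (Th12 p N Th *\<^sub>v g)) + g \<bullet> (Th22 p N Th *\<^sub>v g)"
    using quadratic_form_Th_blocks[OF Th Th_sym s, of "- g"] s g Th_blocks
    by (simp add: mult_mat_vec_uminus[of _ p N] mult_mat_vec_uminus[of _ N N])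
  moreover have "(\<Sum>j<c. (col M1 j \<bullet> s - col Ps0 j \<bullet> g)^2) = (\<Sum>j<c. (col M1 j \<bullet> s)^2)
      - 2 * (\<Sum>j<c. (col M1 j \<bullet> s) * (col Ps0 j \<bullet> g)) + (\<Sum>j<c. (col Ps0 j \<bullet> g)^2)"
    by (simp add: power2_diff sum.distrib sum_subtractf sum_distrib_left mult.assoc)
  ultimately show ?thesis
    by (simp add: scalar_prod_gram_sum[OF M1 s] scalar_prod_gram_sum[OF Ps0 g]
        scalar_prod_mult_transpose_sum[OF M1 Ps0 s g])
qed

locale noisy_experiment =
  fixes n m p l T :: nat
    and As Bs Cs Aa Ba Ca Th :: "real mat"
    and xd xam um du dy ym :: "nat \<Rightarrow> real vec"
  assumes As: "As \<in> carrier_mat n n" and Bs: "Bs \<in> carrier_mat n m"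
    and Cs: "Cs \<in> carrier_mat p n"
    and pl: "p * l > n"
    and Aa: "Aa \<in> carrier_mat (p*l - n) (p*l - n)"
    and Ba: "Ba \<in> carrier_mat (p*l - n) m"
    and Ca: "Ca \<in> carrier_mat p (p*l - n)"
    and dims: "\<forall>k\<le>T+1. xd k \<in> carrier_vec n \<and> xam k \<in> carrier_vec (p*l - n)"
    and dims2: "\<forall>k\<le>T. um k \<in> carrier_vec m \<and> du k \<in> carrier_vec m \<and>
                       dy k \<in> carrier_vec p \<and> ym k \<in> carrier_vec p"
    and plant: "\<forall>k\<le>T. xd (Suc k) = As *\<^sub>v xd k + Bs *\<^sub>v (um k - du k)"
    and art: "\<forall>k\<le>T. xam (Suc k) = Aa *\<^sub>v xam k + Ba *\<^sub>v um k"
    and outp: "\<forall>k\<le>T. ym k = Cs *\<^sub>v xd k + dy k + Ca *\<^sub>v xam k"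
    and Th: "psd_mat Th (p + p*l + m*l)"
    and noise: "let dyaug = (\<lambda>k. dy k + dya Aa Ba Ca du k);
                    D = Delta10 p m l T dyaug du
                in psd_mat (Th - D * D\<^sup>T) (p + p*l + m*l)"
    and exc: "let Ps0 = Psi0 p m l T ym um
              in pd_mat (Ps0 * Ps0\<^sup>T - Th22 p (p*l + m*l) Th) (p*l + m*l)"
begin

lemma aug_dim: "n + (p*l - n) = p*l"
  using pl by simp

lemma l_pos: "0 < l" and p_pos: "0 < p"
  using pl by (auto intro: Nat.gr0I)

sublocale aug: lti_window "aug_state_mat As Aa" "Bs @\<^sub>r Ba" "aug_output_mat Cs Ca" "p*l" m p l
  using aug_carrier[OF As Aa Bs Ba Cs Ca] by unfold_locales (simp_all add: aug_dim)

text \<open>The artificial state generated with the noise-free input \<open>u\<^sup>m - d\<^sup>u\<close>; the remaining part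
  of \<open>x\<^sub>a\<^sup>m\<close> is driven by \<open>d\<^sup>u\<close> alone and produces the output noise \<open>d\<^sup>y\<^sup>a\<close>.\<close>

primrec xa_clean :: "nat \<Rightarrow> real vec" where
  "xa_clean 0 = xam 0"
| "xa_clean (Suc k) = Aa *\<^sub>v xa_clean k + Ba *\<^sub>v (um k - du k)"

definition u_clean :: "nat \<Rightarrow> real vec" where
  "u_clean k = um k - du k"

definition z_clean :: "nat \<Rightarrow> real vec" where
  "z_clean k = xd k @\<^sub>v xa_clean k"

definition y_clean :: "nat \<Rightarrow> real vec" where
  "y_clean k = aug_output_mat Cs Ca *\<^sub>v z_clean k"

definition dy_aug :: "nat \<Rightarrow> real vec" where
  "dy_aug k = dy k + dya Aa Ba Ca du k"

lemma xa_clean_carrier: "xa_clean k \<in> carrier_vec (p*l - n)"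
  using dims Aa Ba by (cases k) (auto intro!: carrier_vecI)

lemma dy_aug_carrier: "k \<le> T \<Longrightarrow> dy_aug k \<in> carrier_vec p"
  using dims2 Ca by (auto simp: dy_aug_def dya_def)

lemma y_clean_carrier: "y_clean k \<in> carrier_vec p"
  using Cs Ca by (intro carrier_vecI) (simp add: y_clean_def aug_output_mat_def)

lemma artificial_state_deviation:
  assumes k: "k \<le> T + 1" and M: "M \<in> carrier_mat r (p*l - n)" and i: "i < r"
  shows "(M *\<^sub>v (xam k - xa_clean k)) $ i = (\<Sum>j<k. (M * Aa ^\<^sub>m (k - j - 1) * Ba *\<^sub>v du j) $ i)"
  using k M i
proof (induction k arbitrary: M)
  case 0
  then show ?case using dims by (simp add: scalar_prod_def)
next
  case (Suc k)
  have xam: "xam k \<in> carrier_vec (p*l - n)" and um: "um k \<in> carrier_vec m"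
    and du: "du k \<in> carrier_vec m"
    using Suc.prems dims dims2 by auto
  have e: "xam k - xa_clean k \<in> carrier_vec (p*l - n)"
    using xam xa_clean_carrier by simp
  have "Aa *\<^sub>v (xam k - xa_clean k) = Aa *\<^sub>v xam k - Aa *\<^sub>v xa_clean k"
    by (rule mult_minus_distrib_mat_vec[OF Aa xam xa_clean_carrier])
  moreover have "Ba *\<^sub>v (um k - du k) = Ba *\<^sub>v um k - Ba *\<^sub>v du k"
    by (rule mult_minus_distrib_mat_vec[OF Ba um du])
  ultimately have "xam (Suc k) - xa_clean (Suc k) = Aa *\<^sub>v (xam k - xa_clean k) + Ba *\<^sub>v du k"
    using art Suc.prems Aa Ba by (intro eq_vecI) auto
  then have "M *\<^sub>v (xam (Suc k) - xa_clean (Suc k)) =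
      (M * Aa) *\<^sub>v (xam k - xa_clean k) + (M * Ba) *\<^sub>v du k"
    using Suc.prems Aa Ba e du by (simp add: mult_add_distrib_mat_vec[of M r "p*l - n"])
  then have "(M *\<^sub>v (xam (Suc k) - xa_clean (Suc k))) $ i =
      ((M * Aa) *\<^sub>v (xam k - xa_clean k)) $ i + ((M * Ba) *\<^sub>v du k) $ i"
    using Suc.prems Ba by simp
  also have "((M * Aa) *\<^sub>v (xam k - xa_clean k)) $ i =
      (\<Sum>j<k. (M * Aa * Aa ^\<^sub>m (k - j - 1) * Ba *\<^sub>v du j) $ i)"
    using Suc.IH[of "M * Aa"] Suc.prems Aa by simp
  also have "\<dots> = (\<Sum>j<k. (M * Aa ^\<^sub>m (Suc k - j - 1) * Ba *\<^sub>v du j) $ i)"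
  proof (intro sum.cong refl)
    fix j assume "j \<in> {..<k}"
    then have "Suc k - j - 1 = Suc (k - j - 1)" by simp
    then have "Aa ^\<^sub>m (Suc k - j - 1) = Aa * Aa ^\<^sub>m (k - j - 1)"
      using mult_pow_mat_commute[OF Aa, of "k - j - 1"] by simp
    moreover have "M * Aa * Aa ^\<^sub>m (k - j - 1) = M * (Aa * Aa ^\<^sub>m (k - j - 1))"
      using Suc.prems Aa pow_carrier_mat[OF Aa] by (intro assoc_mult_mat) auto
    ultimately show "(M * Aa * Aa ^\<^sub>m (k - j - 1) * Ba *\<^sub>v du j) $ i =
        (M * Aa ^\<^sub>m (Suc k - j - 1) * Ba *\<^sub>v du j) $ i" by simp
  qed
  also have "((M * Ba) *\<^sub>v du k) $ i = (M * Aa ^\<^sub>m (Suc k - k - 1) * Ba *\<^sub>v du k) $ i"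
    using Suc.prems Aa by simp
  finally show ?case by simp
qed

lemma ym_decomposition:
  assumes k: "k \<le> T"
  shows "ym k = y_clean k + dy_aug k"
proof -
  have "(Ca *\<^sub>v xam k) $ i = (Ca *\<^sub>v xa_clean k) $ i + dya Aa Ba Ca du k $ i" if i: "i < p" for i
  proof -
    have "(Ca *\<^sub>v (xam k - xa_clean k)) $ i = (Ca *\<^sub>v xam k) $ i - (Ca *\<^sub>v xa_clean k) $ i"
      using i k dims Ca xa_clean_carrier by (simp add: scalar_prod_minus_distrib[of _ "p*l - n"])
    then show ?thesis
      using artificial_state_deviation[of k Ca p i] i k Ca by (simp add: dya_def)
  qed
  then show ?thesis
    using k outp dims dims2 Cs Ca xa_clean_carrier
    by (intro eq_vecI) (auto simp: y_clean_def z_clean_def dy_aug_def aug_output dya_def)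
qed

lemma z_clean_carrier:
  assumes "k \<le> T + 1"
  shows "z_clean k \<in> carrier_vec (p*l)"
proof -
  have "xd k @\<^sub>v xa_clean k \<in> carrier_vec (n + (p*l - n))"
    using assms dims xa_clean_carrier by (intro append_carrier_vec) auto
  then show ?thesis
    by (simp add: z_clean_def aug_dim)
qed

lemma clean_trajectory:
  assumes "j + l \<le> T"
  shows "aug.trajectory_on z_clean u_clean j"
  unfolding aug.trajectory_on_def
proof (intro conjI allI impI)
  show "z_clean j \<in> carrier_vec (p*l)"
    using assms z_clean_carrier by simp
  fix k assume "j \<le> k" "k < j + l"
  then have k: "k \<le> T" using assms by simp
  show "u_clean k \<in> carrier_vec m"
    using k dims2 by (simp add: u_clean_def)
  show "z_clean (Suc k) = aug_state_mat As Aa *\<^sub>v z_clean k + (Bs @\<^sub>r Ba) *\<^sub>v u_clean k"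
    using aug_step[OF As Aa Bs Ba, of "xd k" "xa_clean k" "u_clean k"] k dims dims2 plant xa_clean_carrier
    by (simp add: z_clean_def u_clean_def)
qed

lemma stack_decomposition:
  assumes j: "j + l \<le> T"
  shows "stack_yu p m l ym um j = stack_yu p m l y_clean u_clean j + stack_yu p m l dy_aug du j"
proof (rule eq_vecI)
  fix i assume "i < dim_vec (stack_yu p m l y_clean u_clean j + stack_yu p m l dy_aug du j)"
  then have i: "i < p*l + m*l" by (simp add: stack_yu_def)
  show "stack_yu p m l ym um j $ i = (stack_yu p m l y_clean u_clean j + stack_yu p m l dy_aug du j) $ i"
  proof (cases "i < p*l")
    case True
    then have "i div p < l"
      by (intro less_mult_imp_div_less) (simp add: mult.commute)
    then have "j + i div p \<le> T" "i mod p < p"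
      using j p_pos by simp_all
    moreover have "dim_vec (y_clean (j + i div p)) = p" "dim_vec (dy_aug (j + i div p)) = p"
      using y_clean_carrier dy_aug_carrier \<open>j + i div p \<le> T\<close> by auto
    ultimately show ?thesis
      using True i ym_decomposition[of "j + i div p"] by (simp add: stack_yu_def)
  next
    case False
    then have "i - p*l < l*m"
      using i mult.commute[of l m] by linarith
    then have "(i - p*l) div m < l"
      by (rule less_mult_imp_div_less)
    define k r where "k = j + (i - p*l) div m" and "r = (i - p*l) mod m"
    have "r < m"
      using \<open>i - p*l < l*m\<close> by (cases m) (auto simp: r_def)
    moreover have "k \<le> T"
      using j \<open>(i - p*l) div m < l\<close> by (simp add: k_def)
    ultimately have "um k $ r = (um k - du k) $ r + du k $ r"
      using dims2 by auto
    moreover have "stack_yu p m l ym um j $ i = um k $ r"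
      and "stack_yu p m l y_clean u_clean j $ i = (um k - du k) $ r"
      and "stack_yu p m l dy_aug du j $ i = du k $ r"
      using False i by (simp_all add: stack_yu_def u_clean_def k_def r_def)
    moreover have "dim_vec (stack_yu p m l dy_aug du j) = p*l + m*l"
      by (simp add: stack_yu_def)
    ultimately show ?thesis
      using i by simp
  qed
qed (simp add: stack_yu_def)

definition Ps0 :: "real mat" where "Ps0 = Psi0 p m l T ym um"
definition Ps1 :: "real mat" where "Ps1 = Psi1 p m l T ym um"
definition D :: "real mat" where "D = Delta10 p m l T dy_aug du"

definition Aaug :: "real mat" where
  "Aaug = Ps0 * Ps0\<^sup>T - Th22 p (p*l + m*l) Th"
definition Baug :: "real mat" where
  "Baug = - ((L_mat p m l)\<^sup>T * Ps1 * Ps0\<^sup>T) + Th12 p (p*l + m*l) Th"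
definition Caug :: "real mat" where
  "Caug = (L_mat p m l)\<^sup>T * Ps1 * Ps1\<^sup>T * L_mat p m l - Th11 p Th"

lemma Th_carrier: "Th \<in> carrier_mat (p + (p*l + m*l)) (p + (p*l + m*l))" and Th_sym: "Th\<^sup>T = Th"
  using Th by (auto simp: psd_mat_def add.assoc)

lemma noise_bound: "psd_mat (Th - D * D\<^sup>T) (p + (p*l + m*l))"
  using noise by (simp add: Let_def D_def dy_aug_def[abs_def] add.assoc)

lemma excitation: "pd_mat Aaug (p*l + m*l)"
  using exc by (simp add: Let_def Aaug_def Ps0_def)

lemma Ps0_carrier: "Ps0 \<in> carrier_mat (p*l + m*l) (T + 1 - l)"
  and Ps1_carrier: "Ps1 \<in> carrier_mat (p*l + m*l) (T + 1 - l)"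
  and D_carrier: "D \<in> carrier_mat (p + (p*l + m*l)) (T + 1 - l)"
  by (simp_all add: Ps0_def Ps1_def D_def Psi0_def Psi1_def Delta10_def add.assoc)

lemma col_Ps0: "j < T + 1 - l \<Longrightarrow> col Ps0 j = stack_yu p m l ym um j"
  by (intro eq_vecI) (auto simp: Ps0_def Psi0_def stack_yu_def)

lemma col_Ps1: "j < T + 1 - l \<Longrightarrow> col Ps1 j = stack_yu p m l ym um (j + 1)"
  by (intro eq_vecI) (auto simp: Ps1_def Psi1_def stack_yu_def)

lemma col_D:
  assumes "j < T + 1 - l"
  shows "col D j = dy_aug (j + l) @\<^sub>v stack_yu p m l dy_aug du j"
proof -
  have "dim_vec (dy_aug (j + l)) = p"
    using assms dy_aug_carrier[of "j + l"] by simp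
  then show ?thesis
    using assms by (intro eq_vecI) (auto simp: D_def Delta10_def stack_yu_def add.assoc)
qed

lemma col_L_Ps1: "j < T + 1 - l \<Longrightarrow> col ((L_mat p m l)\<^sup>T * Ps1) j = ym (j + l)"
proof -
  assume j: "j < T + 1 - l"
  have ym: "ym (j + l) \<in> carrier_vec p" using j dims2 by simp
  have "((L_mat p m l)\<^sup>T *\<^sub>v col Ps1 j) $ r = ym (j + l) $ r" if r: "r < p" for r
  proof -
    obtain l' where l': "l = Suc l'" using l_pos by (cases l) auto
    have idx: "p*l - p + r = l'*p + r" "l'*p + r < p*l" using l' r by (simp_all add: algebra_simps)
    have "((L_mat p m l)\<^sup>T *\<^sub>v col Ps1 j) $ r =
        (if l'*p + r < p*l + m*l \<and> True then col Ps1 j $ (l'*p + r) else 0)"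
      by (rule mult_mat_vec_index_delta) (use r idx j Ps1_carrier in \<open>auto simp: L_mat_def\<close>)
    also have "\<dots> = stack_yu p m l ym um (j + 1) $ (l'*p + r)"
      using idx j by (simp add: col_Ps1)
    also have "\<dots> = ym (j + 1 + l') $ r"
      using r idx by (simp add: stack_yu_def)
    also have "j + 1 + l' = j + l"
      using l' by simp
    finally show ?thesis .
  qed
  moreover have "col ((L_mat p m l)\<^sup>T * Ps1) j = (L_mat p m l)\<^sup>T *\<^sub>v col Ps1 j"
    using j Ps1_carrier L_mat_carrier by (intro col_mult2) auto
  ultimately show ?thesis
    using ym by (intro eq_vecI) (auto simp: L_mat_def)
qed

lemma noise_column_orthogonal:
  assumes w: "w \<in> carrier_vec (p*l + m*l)" and Wt: "aug.window_mat\<^sup>T *\<^sub>v w = 0\<^sub>v (p*l + m*l)"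
    and j: "j < T + 1 - l"
  shows "col D j \<bullet> (0\<^sub>v p @\<^sub>v w) = col Ps0 j \<bullet> w"
proof -
  have jT: "j + l \<le> T" using j by simp
  have "w \<bullet> stack_yu p m l y_clean u_clean j = 0"
    using aug.window_orthogonal[OF w Wt clean_trajectory[OF jT]] by (simp add: y_clean_def[abs_def])
  then have orth: "stack_yu p m l y_clean u_clean j \<bullet> w = 0"
    using w by (simp add: comm_scalar_prod[OF _ stack_yu_carrier])
  have "col Ps0 j \<bullet> w = (stack_yu p m l y_clean u_clean j + stack_yu p m l dy_aug du j) \<bullet> w"
    by (simp only: col_Ps0[OF j] stack_decomposition[OF jT])
  also have "\<dots> = stack_yu p m l dy_aug du j \<bullet> w"
    using orth by (simp add: add_scalar_prod_distrib[OF stack_yu_carrier stack_yu_carrier w])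
  also have "\<dots> = col D j \<bullet> (0\<^sub>v p @\<^sub>v w)"
    using w jT dy_aug_carrier[of "j + l"]
    by (simp add: col_D j scalar_prod_append[of _ p _ "p*l + m*l"] stack_yu_carrier)
  finally show ?thesis by simp
qed

lemma window_mat_det_nonzero: "det aug.window_mat \<noteq> 0"
proof
  assume "det aug.window_mat = 0"
  then have "det (aug.window_mat\<^sup>T) = 0"
    using det_transpose[OF aug.window_mat_carrier] by simp
  then obtain w where w: "w \<in> carrier_vec (p*l + m*l)" "w \<noteq> 0\<^sub>v (p*l + m*l)"
    "aug.window_mat\<^sup>T *\<^sub>v w = 0\<^sub>v (p*l + m*l)"
    using det_0_iff_vec_prod_zero[of "aug.window_mat\<^sup>T" "p*l + m*l"] aug.window_mat_carrier by auto
  define v where "v = 0\<^sub>v p @\<^sub>v w"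
  have v: "v \<in> carrier_vec (p + (p*l + m*l))" using w by (simp add: v_def)
  have "0 < w \<bullet> (Aaug *\<^sub>v w)"
    using excitation w by (simp add: pd_mat_def)
  also have "w \<bullet> (Aaug *\<^sub>v w) = w \<bullet> ((Ps0 * Ps0\<^sup>T) *\<^sub>v w) - w \<bullet> (Th22 p (p*l + m*l) Th *\<^sub>v w)"
    unfolding Aaug_def by (rule scalar_prod_minus_mat_vec) (use w Ps0_carrier in \<open>auto simp: Th22_def\<close>)
  also have "w \<bullet> ((Ps0 * Ps0\<^sup>T) *\<^sub>v w) = (\<Sum>j<T + 1 - l. (col D j \<bullet> v)^2)"
    using noise_column_orthogonal[OF w(1,3)] by (simp add: scalar_prod_gram_sum[OF Ps0_carrier w(1)] v_def)
  finally have "w \<bullet> (Th22 p (p*l + m*l) Th *\<^sub>v w) < (\<Sum>j<T + 1 - l. (col D j \<bullet> v)^2)"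
    by simp
  also have "\<dots> \<le> v \<bullet> (Th *\<^sub>v v)"
    by (rule gram_le_if_psd_diff[OF noise_bound Th_carrier D_carrier v])
  also have "\<dots> = w \<bullet> (Th22 p (p*l + m*l) Th *\<^sub>v w)"
  proof -
    have "Th11 p Th *\<^sub>v 0\<^sub>v p \<in> carrier_vec p" "Th12 p (p*l + m*l) Th *\<^sub>v w \<in> carrier_vec p"
      by (auto simp: Th11_def Th12_def intro!: carrier_vecI)
    then show ?thesis
      using quadratic_form_Th_blocks[OF Th_carrier Th_sym zero_carrier_vec w(1)]
      by (simp add: v_def scalar_prod_left_zero)
  qed
  finally show False by simp
qed

definition Wi :: "real mat" where "Wi = the (mat_inverse aug.window_mat)"

text \<open>\<open>H\<close> reconstructs the state of the augmented plant from the last \<open>l\<close> outputs and inputs,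
  and \<open>G\<close> predicts the next output; both exist because the data are exciting.\<close>

definition H :: "real mat" where "H = aug.final_state_mat * Wi"
definition G :: "real mat" where "G = aug_output_mat Cs Ca * H"

lemma window_mat_left_inverse:
  "Wi \<in> carrier_mat (p*l + m*l) (p*l + m*l)" "Wi * aug.window_mat = 1\<^sub>m (p*l + m*l)"
  using mat_inverse_if_det_nonzero[OF aug.window_mat_carrier window_mat_det_nonzero]
  by (simp_all add: Wi_def)

lemma H_carrier: "H \<in> carrier_mat (p*l) (p*l + m*l)"
  using aug.final_state_mat_carrier window_mat_left_inverse by (simp add: H_def)

lemma G_carrier: "G \<in> carrier_mat p (p*l + m*l)"
  using aug.C_carrier H_carrier by (simp add: G_def)

lemma clean_output_arx:
  assumes "j + l \<le> T"
  shows "y_clean (j + l) = G *\<^sub>v stack_yu p m l y_clean u_clean j"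
  using aug.state_from_window[OF window_mat_left_inverse clean_trajectory[OF assms]] aug.C_carrier H_carrier
  by (simp add: y_clean_def[abs_def] G_def H_def stack_yu_carrier)

lemma residual_noise_column:
  assumes s: "s \<in> carrier_vec p" and j: "j < T + 1 - l"
  shows "col D j \<bullet> (s @\<^sub>v - (G\<^sup>T *\<^sub>v s)) =
    col ((L_mat p m l)\<^sup>T * Ps1) j \<bullet> s - col Ps0 j \<bullet> (G\<^sup>T *\<^sub>v s)"
proof -
  have jT: "j + l \<le> T" using j by simp
  define g where "g = G\<^sup>T *\<^sub>v s"
  define noise where "noise = stack_yu p m l dy_aug du j"
  define clean where "clean = stack_yu p m l y_clean u_clean j"
  have g: "g \<in> carrier_vec (p*l + m*l)"
    using G_carrier by (auto simp: g_def intro!: carrier_vecI)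
  have noise: "noise \<in> carrier_vec (p*l + m*l)" and clean: "clean \<in> carrier_vec (p*l + m*l)"
    by (simp_all add: noise_def clean_def stack_yu_carrier)
  have dy: "dy_aug (j + l) \<in> carrier_vec p" using dy_aug_carrier jT by simp
  have "col D j \<bullet> (s @\<^sub>v - g) = dy_aug (j + l) \<bullet> s - noise \<bullet> g"
    using dy s noise g by (simp add: col_D[OF j] noise_def[symmetric] scalar_prod_append[of _ p _ "p*l + m*l"])
  moreover have "col ((L_mat p m l)\<^sup>T * Ps1) j \<bullet> s = y_clean (j + l) \<bullet> s + dy_aug (j + l) \<bullet> s"
    using j jT dy s y_clean_carrier by (simp add: col_L_Ps1 ym_decomposition add_scalar_prod_distrib[of _ p])
  moreover have "col Ps0 j \<bullet> g = s \<bullet> y_clean (j + l) + noise \<bullet> g"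
  proof -
    have "col Ps0 j \<bullet> g = clean \<bullet> g + noise \<bullet> g"
      using clean noise g
      by (simp add: col_Ps0[OF j] stack_decomposition[OF jT] clean_def noise_def
          add_scalar_prod_distrib[of _ "p*l + m*l"])
    moreover have "clean \<bullet> g = s \<bullet> (G *\<^sub>v clean)"
      unfolding g_def by (rule scalar_prod_transpose_swap[OF G_carrier s clean])
    ultimately show ?thesis
      by (simp add: clean_def clean_output_arx[OF jT])
  qed
  ultimately show ?thesis
    using s y_clean_carrier by (simp add: comm_scalar_prod[of _ p s] g_def)
qed

text \<open>The true predictor \<open>G\<close> is consistent with the data: the residuals
  \<open>y(j+l) - G \<psi>\<^sub>j\<close> are noise columns \<open>[I, -G] \<Delta>\<^sub>j\<close>, so the noise bound \<open>\<Delta>\<Delta>\<^sup>T \<preceq> \<Theta>\<close>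
  evaluated at \<open>(s, -G\<^sup>T s)\<close> is exactly this inequality.\<close>

lemma data_qmi:
  assumes s: "s \<in> carrier_vec p"
  shows "s \<bullet> (Caug *\<^sub>v s) + 2 * (s \<bullet> (Baug *\<^sub>v (G\<^sup>T *\<^sub>v s))) + (G\<^sup>T *\<^sub>v s) \<bullet> (Aaug *\<^sub>v (G\<^sup>T *\<^sub>v s)) \<le> 0"
proof -
  define M1 where "M1 = (L_mat p m l)\<^sup>T * Ps1"
  have M1: "M1 \<in> carrier_mat p (T + 1 - l)"
    using L_mat_carrier[of p m l] Ps1_carrier by (simp add: M1_def)
  have g: "G\<^sup>T *\<^sub>v s \<in> carrier_vec (p*l + m*l)"
    using G_carrier by (auto intro!: carrier_vecI)
  have "M1\<^sup>T = Ps1\<^sup>T * L_mat p m l"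
    using L_mat_carrier[of p m l] Ps1_carrier by (simp add: M1_def transpose_mult[of _ p "p*l + m*l"])
  then have "Caug = M1 * M1\<^sup>T - Th11 p Th"
    using M1 L_mat_carrier[of p m l] Ps1_carrier
    by (simp add: Caug_def M1_def[symmetric] assoc_mult_mat[of M1 p "T + 1 - l" _ "p*l + m*l" _ p])
  moreover have "Baug = - (M1 * Ps0\<^sup>T) + Th12 p (p*l + m*l) Th"
    by (simp add: Baug_def M1_def)
  moreover have "(\<Sum>j<T + 1 - l. (col M1 j \<bullet> s - col Ps0 j \<bullet> (G\<^sup>T *\<^sub>v s))^2) =
      (\<Sum>j<T + 1 - l. (col D j \<bullet> (s @\<^sub>v - (G\<^sup>T *\<^sub>v s)))^2)"
    by (intro sum.cong refl) (simp add: residual_noise_column[OF s] M1_def)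
  moreover have "\<dots> \<le> (s @\<^sub>v - (G\<^sup>T *\<^sub>v s)) \<bullet> (Th *\<^sub>v (s @\<^sub>v - (G\<^sup>T *\<^sub>v s)))"
    by (rule gram_le_if_psd_diff[OF noise_bound Th_carrier D_carrier]) (use s g in simp)
  ultimately show ?thesis
    using data_quadratic_form[OF M1 Ps0_carrier Th_carrier Th_sym s g]
    by (simp add: Aaug_def)
qed

lemma data_matrices_carrier:
  "Aaug \<in> carrier_mat (p*l + m*l) (p*l + m*l)" "Baug \<in> carrier_mat p (p*l + m*l)" "Caug \<in> carrier_mat p p"
  using Ps0_carrier Ps1_carrier L_mat_carrier[of p m l]
  by (auto simp: Aaug_def Baug_def Caug_def Th11_def Th12_def Th22_def)

lemma closed_loop_sol_augmented:
  assumes K: "K \<in> carrier_mat m (p*l + m*l)"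
    and sol: "closed_loop_sol As Bs Cs Aa Ba Ca (F_mat p m l) (L_mat p m l) (B_mat p m l) K
      n (p*l - n) (p*l + m*l) x xa chi"
  shows "aug.closed_loop K (\<lambda>k. x k @\<^sub>v xa k) chi"
  unfolding aug.closed_loop_def
proof (intro allI conjI)
  fix k
  have x: "x k \<in> carrier_vec n" and xa: "xa k \<in> carrier_vec (p*l - n)"
    and chi: "chi k \<in> carrier_vec (p*l + m*l)"
    using sol by (auto simp: closed_loop_sol_def)
  have u: "K *\<^sub>v chi k \<in> carrier_vec m" using K chi by simp
  have "x k @\<^sub>v xa k \<in> carrier_vec (n + (p*l - n))" using x xa by simp
  then show "x k @\<^sub>v xa k \<in> carrier_vec (p*l)" by (simp add: aug_dim)
  show "chi k \<in> carrier_vec (p*l + m*l)" by (fact chi)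
  have "x (Suc k) @\<^sub>v xa (Suc k) = (As *\<^sub>v x k + Bs *\<^sub>v (K *\<^sub>v chi k)) @\<^sub>v (Aa *\<^sub>v xa k + Ba *\<^sub>v (K *\<^sub>v chi k))"
    using sol Ba K chi by (simp add: closed_loop_sol_def)
  then show "x (Suc k) @\<^sub>v xa (Suc k) = aug_state_mat As Aa *\<^sub>v (x k @\<^sub>v xa k) + (Bs @\<^sub>r Ba) *\<^sub>v (K *\<^sub>v chi k)"
    using aug_step[OF As Aa Bs Ba x xa u] by simp
  have "chi (Suc k) = (L_mat p m l * Ca) *\<^sub>v xa k + (F_mat p m l + B_mat p m l * K) *\<^sub>v chi k
      + L_mat p m l *\<^sub>v (Cs *\<^sub>v x k)"
    using sol by (simp add: closed_loop_sol_def)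
  then show "chi (Suc k) = F_mat p m l *\<^sub>v chi k + L_mat p m l *\<^sub>v (aug_output_mat Cs Ca *\<^sub>v (x k @\<^sub>v xa k))
      + B_mat p m l *\<^sub>v (K *\<^sub>v chi k)"
    using x xa chi K Cs Ca F_mat_carrier[of p m l] L_mat_carrier[of p m l] B_mat_carrier[of p m l]
    by (simp add: aug_output add_mult_distrib_mat_vec[of _ "p*l + m*l" "p*l + m*l"]
        mult_add_distrib_mat_vec[of _ "p*l + m*l" p]) (intro eq_vecI, simp_all)
qed

lemma cl_norm_sq_energy:
  assumes "x k \<in> carrier_vec n" "xa k \<in> carrier_vec (p*l - n)"
  shows "cl_norm (x k) (xa k) (chi k) ^ 2 = aug.energy (\<lambda>k. x k @\<^sub>v xa k) chi k"
  using assms by (simp add: cl_norm_def aug.energy_def scalar_prod_append add_nonneg_nonneg scalar_prod_self_nonneg)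

lemma closed_loop_GAS_if_lyapunov:
  assumes K: "K \<in> carrier_mat m (p*l + m*l)" and P: "pd_mat P (p*l + m*l)"
    and decrease: "\<And>a. a \<in> carrier_vec (p*l + m*l) \<Longrightarrow> a \<noteq> 0\<^sub>v (p*l + m*l) \<Longrightarrow>
      ((F_mat p m l + B_mat p m l * K + L_mat p m l * G)\<^sup>T *\<^sub>v a) \<bullet>
        (P *\<^sub>v ((F_mat p m l + B_mat p m l * K + L_mat p m l * G)\<^sup>T *\<^sub>v a)) < a \<bullet> (P *\<^sub>v a)"
  shows "closed_loop_GAS As Bs Cs Aa Ba Ca (F_mat p m l) (L_mat p m l) (B_mat p m l) K
    n (p*l - n) (p*l + m*l)"
proof -
  have Phi: "aug.closed_loop_mat K Wi = F_mat p m l + B_mat p m l * K + L_mat p m l * G"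
    by (simp add: aug.closed_loop_mat_def[OF K window_mat_left_inverse] G_def H_def)
  obtain c g where "1 < g"
    and "\<And>k i j. i < p*l + m*l \<Longrightarrow> j < p*l + m*l \<Longrightarrow> \<bar>(aug.closed_loop_mat K Wi ^\<^sub>m k) $$ (i,j)\<bar> \<le> c / g ^ k"
    using lyapunov_powers_decay[OF aug.closed_loop_mat_carrier[OF K window_mat_left_inverse] P] decrease unfolding Phi by blast
  then obtain \<beta> q where \<beta>q: "0 \<le> \<beta>" "0 < q" "q < 1"
    and bound: "\<And>z chi k. aug.closed_loop K z chi \<Longrightarrow> aug.energy z chi k \<le> \<beta> * q ^ k * aug.energy z chi 0"
    using aug.closed_loop_exponential_bound[OF K window_mat_left_inverse] by blast
  show ?thesis
  proof (rule closed_loop_GAS_if_exponential_bound[OF \<beta>q(2,3,1)])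
    fix x xa chi k
    assume sol: "closed_loop_sol As Bs Cs Aa Ba Ca (F_mat p m l) (L_mat p m l) (B_mat p m l) K
      n (p*l - n) (p*l + m*l) x xa chi"
    then have "x j \<in> carrier_vec n" "xa j \<in> carrier_vec (p*l - n)" for j
      by (auto simp: closed_loop_sol_def)
    then show "cl_norm (x k) (xa k) (chi k) ^ 2 \<le> \<beta> * q ^ k * cl_norm (x 0) (xa 0) (chi 0) ^ 2"
      using bound[OF closed_loop_sol_augmented[OF K sol]] by (simp add: cl_norm_sq_energy)
  qed
qed

end

theorem theorem2:
  fixes n m p l T :: nat
    and As Bs Cs Aa Ba Ca Th P Y :: "real mat"
    and xd xam um du dy ym :: "nat \<Rightarrow> real vec"
  assumes As: "As \<in> carrier_mat n n" and Bs: "Bs \<in> carrier_mat n m"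
    and Cs: "Cs \<in> carrier_mat p n"
    and obs: "obs_index As Cs l"
    and pl: "p * l > n"
    and Aa: "Aa \<in> carrier_mat (p*l - n) (p*l - n)"
    and Ba: "Ba \<in> carrier_mat (p*l - n) m"
    and Ca: "Ca \<in> carrier_mat p (p*l - n)"
    and dims: "\<forall>k\<le>T+1. xd k \<in> carrier_vec n \<and> xam k \<in> carrier_vec (p*l - n)"
    and dims2: "\<forall>k\<le>T. um k \<in> carrier_vec m \<and> du k \<in> carrier_vec m \<and>
                       dy k \<in> carrier_vec p \<and> ym k \<in> carrier_vec p"
    and plant: "\<forall>k\<le>T. xd (Suc k) = As *\<^sub>v xd k + Bs *\<^sub>v (um k - du k)"
    and art: "\<forall>k\<le>T. xam (Suc k) = Aa *\<^sub>v xam k + Ba *\<^sub>v um k"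
    and outp: "\<forall>k\<le>T. ym k = Cs *\<^sub>v xd k + dy k + Ca *\<^sub>v xam k"
    and Th: "psd_mat Th (p + p*l + m*l)"
    and noise: "let dyaug = (\<lambda>k. dy k + dya Aa Ba Ca du k);
                    D = Delta10 p m l T dyaug du
                in psd_mat (Th - D * D\<^sup>T) (p + p*l + m*l)"
    and exc: "let Ps0 = Psi0 p m l T ym um
              in pd_mat (Ps0 * Ps0\<^sup>T - Th22 p (p*l + m*l) Th) (p*l + m*l)"
    and P: "pd_mat P (p*l + m*l)"
    and Y: "Y \<in> carrier_mat m (p*l + m*l)"
    and LMI: "let N = p*l + m*l; Ps0 = Psi0 p m l T ym um; Ps1 = Psi1 p m l T ym um;
                  L = L_mat p m l; F = F_mat p m l; Bl = B_mat p m l;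
                  Aaug = Ps0 * Ps0\<^sup>T - Th22 p N Th;
                  Baug = - (L\<^sup>T * Ps1 * Ps0\<^sup>T) + Th12 p N Th;
                  Caug = L\<^sup>T * Ps1 * Ps1\<^sup>T * L - Th11 p Th
              in nd_mat (block3 N (\<lambda>i j.
                   if i = 0 \<and> j = 0 then - P - L * Caug * L\<^sup>T
                   else if i = 0 \<and> j = 1 then F * P + Bl * Y
                   else if i = 0 \<and> j = 2 then L * Baug
                   else if i = 1 \<and> j = 0 then P * F\<^sup>T + Y\<^sup>T * Bl\<^sup>T
                   else if i = 1 \<and> j = 1 then - P
                   else if i = 1 \<and> j = 2 then - P
                   else if i = 2 \<and> j = 0 then Baug\<^sup>T * L\<^sup>T
                   else if i = 2 \<and> j = 1 then - P
                   else - Aaug)) (3 * N)"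
  shows "let K = Y * the (mat_inverse P)
         in closed_loop_GAS As Bs Cs Aa Ba Ca (F_mat p m l) (L_mat p m l) (B_mat p m l) K
              n (p*l - n) (p*l + m*l)"
proof -
  interpret noisy_experiment n m p l T As Bs Cs Aa Ba Ca Th xd xam um du dy ym
    by unfold_locales (fact As Bs Cs pl Aa Ba Ca dims dims2 plant art outp Th noise exc)+
  define K where "K = Y * the (mat_inverse P)"
  have K: "K \<in> carrier_mat m (p*l + m*l)"
    using Y mat_inverse_if_det_nonzero(1)[OF _ pd_mat_det_nonzero[OF P]] P
    by (auto simp: K_def pd_mat_def)
  have "\<And>a. a \<in> carrier_vec (p*l + m*l) \<Longrightarrow> a \<noteq> 0\<^sub>v (p*l + m*l) \<Longrightarrow>
      ((F_mat p m l + B_mat p m l * K + L_mat p m l * G)\<^sup>T *\<^sub>v a) \<bullet>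
        (P *\<^sub>v ((F_mat p m l + B_mat p m l * K + L_mat p m l * G)\<^sup>T *\<^sub>v a)) < a \<bullet> (P *\<^sub>v a)"
    unfolding K_def
    by (rule lmi_lyapunov_decrease[OF P Y F_mat_carrier B_mat_carrier L_mat_carrier G_carrier
          data_matrices_carrier data_qmi
          LMI[unfolded Let_def, folded Ps0_def Ps1_def, folded Aaug_def Baug_def Caug_def]])
  then show ?thesis
    unfolding Let_def K_def[symmetric] by (rule closed_loop_GAS_if_lyapunov[OF K P])
qed

end
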